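(* In the stochastic approximation setting described in the context (with $\mu>0$ chosen so that $\alpha_2>0$), let $\epsilon_k=\epsilon/(k+K)^\xi$ with $\epsilon>0$, $\xi\in(0,1]$, where $K=\max(1,\epsilon\alpha_3/\alpha_2)$ if $\xi=1$, and $K=\max\big(1,(\epsilon\alpha_3/\alpha_2)^{1/\xi},[2\xi/(\alpha_2\epsilon)]^{1/(1-\xi)}\big)$ if $\xi\in(0,1)$. Then for all $k\ge0$: (1) if $\xi=1$ and $\epsilon<1/\alpha_2$: $\mathbb{E}[\|x_k-x^*\|_c^2]\le\alpha_1\|x_0-x^*\|_c^2\left(\frac{K}{k+K}\right)^{\alpha_2\epsilon}+\frac{4\epsilon^2\alpha_4}{1-\alpha_2\epsilon}\frac{A+2B\|x^*\|_c^2}{(k+K)^{\alpha_2\epsilon}}$; (2) if $\xi=1$ and $\epsilon=1/\alpha_2$: $\mathbb{E}[\|x_k-x^*\|_c^2]\le\alpha_1\|x_0-x^*\|_c^2\frac{K}{k+K}+\frac{4\alpha_4}{\alpha_2^2}\frac{(A+2B\|x^*\|_c^2)\log(k+K)}{k+K}$; (3) if $\xi=1$ and $\epsilon>1/\alpha_2$: $\mathbb{E}[\|x_k-x^*\|_c^2]\le\alpha_1\|x_0-x^*\|_c^2\left(\frac{K}{k+K}\right)^{\alpha_2\epsilon}+\frac{4e\epsilon^2\alpha_4}{\alpha_2\epsilon-1}\frac{A+2B\|x^*\|_c^2}{k+K}$; (4) if $\xi\in(0,1)$: $\mathbb{E}[\|x_k-x^*\|_c^2]\le\alpha_1\|x_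0-x^*\|_c^2\exp\left\{-\frac{\alpha_2\epsilon}{1-\xi}\left[(k+K)^{1-\xi}-K^{1-\xi}\right]\right\}+\frac{2\epsilon\alpha_4}{\alpha_2}\frac{A+2B\|x^*\|_c^2}{(k+K)^\xi}$.
   Context: Let $\|\cdot\|_c,\|\cdot\|_e$ be arbitrary norms on $\mathbb{R}^d$. Let $\mathcal H:\mathbb{R}^d\to\mathbb{R}^d$ satisfy $\|\mathcal H(x)-\mathcal H(y)\|_c\le\gamma\|x-y\|_c$ for all $x,y$, for some $\gamma\in(0,1)$, and let $x^*$ be its unique fixed point. Fix a deterministic $x_0\in\mathbb{R}^d$ and define $x_{k+1}=x_k+\epsilon_k(\mathcal H(x_k)-x_k+w_k)$, where $\{w_k\}$ are random vectors such that, letting $\mathcal F_k$ be the $\sigma$-algebra generated by $x_0,w_0,\dots,x_{k-1},w_{k-1},x_k$, for all $k\ge0$: $\mathbb{E}[w_k\mid\mathcal F_k]=0$ and $\mathbb{E}[\|w_k\|_e^2\mid\mathcal F_k]\le A+B\|x_k\|_e^2$ for constants $A,B>0$. A convex differentiable $h$ is $L$-smooth w.r.t. a norm $\|\cdot\|$ if $h(y)\le h(x)+\langle\nabla h(x),y-x\rangle+\frac L2\|x-y\|^2$ for all $x,y$. Let $\|\cdot\|_s$ be a norm such that $g(x)=\frac12\|x\|_s^2$ is $L$-smooth w.r.t. $\|\cdot\|_s$, and let $\ell_{cs},\ell_{es}\in(0,1]$, $u_{cs},u_{es}\in[1,\infty)$ satisfy $\ell_{cs}\|x\|_c\le\|x\|_s\le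 u_{cs}\|x\|_c$ and $\ell_{es}\|x\|_e\le\|x\|_s\le u_{es}\|x\|_e$ for all $x$. For $\mu>0$ define $\alpha_1=\frac{1+\mu/\ell_{cs}^2}{1+\mu/u_{cs}^2}$, $\alpha_2=1-\gamma\alpha_1^{1/2}$, $\alpha_3=\frac{4u_{cs}^2u_{es}^2(B+2)L(\ell_{cs}^2+\mu)}{\mu\ell_{cs}^2\ell_{es}^2}$, $\alpha_4=\frac{\alpha_3}{2(B+2)}$; $\mu$ is chosen so that $\alpha_2>0$. *)

theory Defs
  imports "HOL-Probability.Probability"
begin

definition is_norm :: "('a::real_vector \<Rightarrow> real) \<Rightarrow> bool" where
  "is_norm n \<longleftrightarrow> (\<forall>x. 0 \<le> n x) \<and> (\<forall>x. n x = 0 \<longleftrightarrow> x = 0)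
     \<and> (\<forall>c x. n (c *\<^sub>R x) = \<bar>c\<bar> * n x) \<and> (\<forall>x y. n (x + y) \<le> n x + n y)"

definition L_smooth :: "('a::euclidean_space \<Rightarrow> real) \<Rightarrow> ('a \<Rightarrow> real) \<Rightarrow> real \<Rightarrow> bool" where
  "L_smooth h n L \<longleftrightarrow> convex_on UNIV h \<and>
     (\<exists>grad. (\<forall>x. (h has_derivative (\<lambda>v. grad x \<bullet> v)) (at x)) \<and>
        (\<forall>x y. h y \<le> h x + grad x \<bullet> (y - x) + L / 2 * (n (x - y))\<^sup>2))"

definition gen_filtr :: "'w measure \<Rightarrow> (nat \<Rightarrow> 'w \<Rightarrow> 'a::topological_space)
    \<Rightarrow> (nat \<Rightarrow> 'w \<Rightarrow> 'a) \<Rightarrow> nat \<Rightarrow> 'w measure" where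
  "gen_filtr M x w k = sigma (space M)
     ((\<Union>i\<in>{..k}. {x i -` B \<inter> space M | B. B \<in> sets borel})
      \<union> (\<Union>i\<in>{..<k}. {w i -` B \<inter> space M | B. B \<in> sets borel}))"

end

theory Submission
  imports Defs
begin

text \<open>The Lyapunov function is the generalized Moreau envelope
  \<open>M(z) = min\<^sub>u (\<parallel>u\<parallel>\<^sub>c\<^sup>2 / 2 + \<parallel>z - u\<parallel>\<^sub>s\<^sup>2 / (2\<mu>))\<close>.
  It is squeezed between \<open>\<parallel>z\<parallel>\<^sub>c\<^sup>2 / (2(1 + \<mu>/l\<^sub>c\<^sub>s\<^sup>2))\<close> and \<open>\<parallel>z\<parallel>\<^sub>c\<^sup>2 / (2(1 + \<mu>/u\<^sub>c\<^sub>s\<^sup>2))\<close>,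
  it is \<open>L/\<mu>\<close>-smooth with respect to \<open>\<parallel>\<cdot>\<parallel>\<^sub>s\<close>, and it is 2-homogeneous, so that
  \<open>\<langle>\<nabla>M(z), z\<rangle> = 2 M(z)\<close>. Expanding \<open>M\<close> along one step of the iteration with the smoothness
  inequality, bounding the drift term with the contraction property of \<open>H\<close> and killing the
  noise term with its vanishing conditional mean gives
  \<open>E M(x\<^sub>k\<^sub>+\<^sub>1 - x\<^sup>*) \<le> (1 - \<alpha>\<^sub>2 \<epsilon>\<^sub>k) E M(x\<^sub>k - x\<^sup>*) + \<epsilon>\<^sub>k\<^sup>2 D\<close> as soon as \<open>\<epsilon>\<^sub>k \<alpha>\<^sub>3 \<le> \<alpha>\<^sub>2\<close>.
  Unrolling the recursion bounds the error by the product \<open>\<Prod>\<^sub>j (1 - \<alpha>\<^sub>2 \<epsilon>\<^sub>j)\<close> and the damped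
  sum \<open>\<Sum>\<^sub>i \<epsilon>\<^sub>i\<^sup>2 \<Prod>\<^sub>j\<^sub>>\<^sub>i (1 - \<alpha>\<^sub>2 \<epsilon>\<^sub>j)\<close>; for \<open>\<epsilon>\<^sub>k = \<epsilon> / (k + K)\<^sup>\<xi>\<close> both are compared with
  integrals of powers of \<open>k + K\<close>, which produces the four regimes.\<close>

section \<open>Norms given as functions\<close>

lemma is_normD:
  assumes "is_norm n"
  shows "0 \<le> n x" "n x = 0 \<longleftrightarrow> x = 0" "n (c *\<^sub>R x) = \<bar>c\<bar> * n x" "n (x + y) \<le> n x + n y"
  using assms unfolding is_norm_def by auto

lemma is_norm_zero: "is_norm n \<Longrightarrow> n 0 = 0"
  using is_normD(2) by blast

lemma is_norm_minus: assumes "is_norm n" shows "n (- x) = n x"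
  using is_normD(3)[OF assms, of "-1" x] by simp

lemma is_norm_minus_commute: assumes "is_norm n" shows "n (x - y) = n (y - x)"
  using is_norm_minus[OF assms, of "x - y"] by simp

lemma is_norm_diff_le: assumes "is_norm n" shows "n (x - y) \<le> n x + n y"
  using is_normD(4)[OF assms, of x "- y"] is_norm_minus[OF assms, of y] by simp

lemma is_norm_scaleR_nonneg: assumes "is_norm n" "0 \<le> c" shows "n (c *\<^sub>R x) = c * n x"
  using is_normD(3)[OF assms(1)] assms(2) by simp

lemma is_norm_reverse_triangle: assumes "is_norm n" shows "\<bar>n x - n y\<bar> \<le> n (x - y)"
  using is_normD(4)[OF assms, of "x - y" y] is_normD(4)[OF assms, of "y - x" x]
    is_norm_minus_commute[OF assms, of x y] by simp

lemma is_norm_sum_le: assumes "is_norm n" shows "n (sum f S) \<le> (\<Sum>i\<in>S. n (f i))"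
proof (induction S rule: infinite_finite_induct)
  case (insert a S)
  then show ?case using is_normD(4)[OF assms, of "f a" "sum f S"] by simp
qed (simp_all add: is_norm_zero[OF assms])

lemma is_norm_le_norm:
  fixes n :: "'a::euclidean_space \<Rightarrow> real"
  assumes "is_norm n"
  obtains C where "C > 0" "\<And>x. n x \<le> C * norm x"
proof
  define C where "C = (\<Sum>b\<in>Basis. n b) + 1"
  show "C > 0" unfolding C_def using is_normD(1)[OF assms] by (simp add: add_nonneg_pos sum_nonneg)
  fix x :: 'a
  have "n x = n (\<Sum>b\<in>Basis. (x \<bullet> b) *\<^sub>R b)" by (simp add: euclidean_representation)
  also have "\<dots> \<le> (\<Sum>b\<in>Basis. \<bar>x \<bullet> b\<bar> * n b)"
    using is_norm_sum_le[OF assms, of "\<lambda>b. (x \<bullet> b) *\<^sub>R b" Basis] is_normD(3)[OF assms] by simp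
  also have "\<dots> \<le> (\<Sum>b\<in>Basis. norm x * n b)"
    by (rule sum_mono) (simp add: Basis_le_norm is_normD(1)[OF assms] mult_right_mono)
  also have "\<dots> \<le> C * norm x" unfolding C_def by (simp add: sum_distrib_left algebra_simps)
  finally show "n x \<le> C * norm x" .
qed

lemma continuous_on_is_norm:
  fixes n :: "'a::euclidean_space \<Rightarrow> real"
  assumes "is_norm n"
  shows "continuous_on UNIV n"
proof -
  obtain C where C: "C > 0" "\<And>x. n x \<le> C * norm x" using is_norm_le_norm[OF assms] by blast
  then have "C-lipschitz_on UNIV n"
    using order_trans[OF is_norm_reverse_triangle[OF assms] C(2)]
    by (intro lipschitz_onI) (auto simp: dist_real_def dist_norm)
  then show ?thesis by (rule lipschitz_on_continuous_on)
qed

lemma borel_measurable_is_norm: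
  fixes n :: "'a::euclidean_space \<Rightarrow> real"
  assumes "is_norm n"
  shows "n \<in> borel_measurable borel"
  using continuous_on_is_norm[OF assms] by (rule borel_measurable_continuous_onI)

text \<open>The minimum of \<open>n\<close> over the compact unit sphere is positive.\<close>
lemma is_norm_ge_norm:
  fixes n :: "'a::euclidean_space \<Rightarrow> real"
  assumes "is_norm n"
  obtains c where "c > 0" "\<And>x. c * norm x \<le> n x"
proof -
  have "sphere (0::'a) 1 \<noteq> {}"
    using SOME_Basis norm_Basis[of "SOME b. b \<in> (Basis::'a set)"] by (metis empty_iff mem_sphere_0)
  then obtain x0 where x0: "x0 \<in> sphere (0::'a) 1" "\<And>y. y \<in> sphere 0 1 \<Longrightarrow> n x0 \<le> n y"
    using continuous_attains_inf[OF compact_sphere _ continuous_on_subset[OF continuous_on_is_norm[OF assms]]]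
    by blast
  then have pos: "n x0 > 0" using is_normD(1,2)[OF assms, of x0] by fastforce
  have "n x0 * norm x \<le> n x" for x
  proof (cases "x = 0")
    case False
    have "n x0 \<le> n ((1 / norm x) *\<^sub>R x)" using x0(2)[of "(1 / norm x) *\<^sub>R x"] False by simp
    also have "\<dots> = n x / norm x" using is_norm_scaleR_nonneg[OF assms, of "1 / norm x" x] by simp
    finally show ?thesis using False by (simp add: field_simps)
  qed (simp add: is_norm_zero[OF assms])
  with pos that show ?thesis by blast
qed

section \<open>Convexity and elementary inequalities\<close>

lemma convex_on_above_tangent:
  fixes g :: "'a::real_normed_vector \<Rightarrow> real"
  assumes convex: "convex_on UNIV g" and deriv: "(g has_derivative D) (at a)"
  shows "g a + D (b - a) \<le> g b"
proof -
  define h where "h = b - a"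
  have "((\<lambda>t::real. a + t *\<^sub>R h) has_derivative (\<lambda>t. t *\<^sub>R h)) (at 0)"
    by (auto intro!: derivative_eq_intros)
  from has_derivative_compose[OF this, of g D] deriv
  have "((\<lambda>t. g (a + t *\<^sub>R h)) has_derivative (\<lambda>t. D (t *\<^sub>R h))) (at 0)" by simp
  moreover have "(\<lambda>t. D (t *\<^sub>R h)) = (*) (D h)"
    using linear_scale[OF has_derivative_linear[OF deriv]] by (auto simp: mult.commute)
  ultimately have "((\<lambda>t. g (a + t *\<^sub>R h)) has_field_derivative D h) (at 0)"
    unfolding has_field_derivative_def by simp
  then have "((\<lambda>s. (g (a + s *\<^sub>R h) - g a) / s) \<longlongrightarrow> D h) (at_right 0)"
    unfolding DERIV_def by (auto intro: tendsto_mono[OF at_le])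
  moreover have "\<forall>\<^sub>F s in at_right 0. (g (a + s *\<^sub>R h) - g a) / s \<le> g b - g a"
    unfolding eventually_at_right[of 0 "1::real", simplified]
  proof (intro exI[of _ 1] conjI allI impI)
    fix s :: real assume s: "0 < s" "s < 1"
    have "g ((1 - s) *\<^sub>R a + s *\<^sub>R b) \<le> (1 - s) * g a + s * g b"
      using convex_onD[OF convex, of s a b] s by simp
    moreover have "(1 - s) *\<^sub>R a + s *\<^sub>R b = a + s *\<^sub>R h" by (simp add: h_def algebra_simps)
    ultimately have "g (a + s *\<^sub>R h) - g a \<le> s * (g b - g a)" by (simp add: algebra_simps)
    then show "(g (a + s *\<^sub>R h) - g a) / s \<le> g b - g a"
      using s by (simp add: divide_le_eq mult.commute)
  qed simp
  ultimately have "D h \<le> g b - g a"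
    by (intro tendsto_le[OF trivial_limit_at_right_real tendsto_const])
  then show ?thesis unfolding h_def by simp
qed

lemma le_of_le_add_mult_small:
  fixes a b c :: real
  assumes "\<And>t. 0 < t \<Longrightarrow> t < 1 \<Longrightarrow> a \<le> b + t * c"
  shows "a \<le> b"
proof (rule tendsto_le[OF trivial_limit_at_right_real])
  show "((\<lambda>t. b + t * c) \<longlongrightarrow> b) (at_right 0)"
    by (auto intro!: tendsto_eq_intros)
  show "((\<lambda>t. a) \<longlongrightarrow> a) (at_right 0)" by simp
  show "\<forall>\<^sub>F t in at_right 0. a \<le> b + t * c"
    unfolding eventually_at_right[of 0 "1::real", simplified] using assms by (intro exI[of _ 1]) auto
qed

lemma sq_le_weighted_sum_sq:
  fixes p q r b :: real
  assumes "0 \<le> r" "r \<le> p + q" "b > 0"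
  shows "r\<^sup>2 * (b / (1 + b)) \<le> p\<^sup>2 + b * q\<^sup>2"
proof -
  have "r\<^sup>2 * b \<le> (p + q)\<^sup>2 * b" using assms by (intro mult_right_mono power_mono) auto
  also have "\<dots> = (1 + b) * (p\<^sup>2 + b * q\<^sup>2) - (p - b * q)\<^sup>2" by (simp add: power2_eq_square algebra_simps)
  also have "\<dots> \<le> (1 + b) * (p\<^sup>2 + b * q\<^sup>2)" by simp
  finally show ?thesis using assms(3) by (simp add: field_simps)
qed

section \<open>The generalized Moreau envelope\<close>

locale gen_moreau_envelope =
  fixes nc ns :: "'a::euclidean_space \<Rightarrow> real" and \<mu> L lcs ucs :: real
  assumes nc_norm: "is_norm nc" and ns_norm: "is_norm ns" and mu_pos: "\<mu> > 0"
    and smooth: "L_smooth (\<lambda>u. (ns u)\<^sup>2 / 2) ns L"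
    and nc_ns_equiv: "\<And>u. lcs * nc u \<le> ns u \<and> ns u \<le> ucs * nc u"
    and lcs_pos: "lcs > 0" and ucs_pos: "ucs > 0"
begin

definition sq_grad :: "'a \<Rightarrow> 'a" where
  "sq_grad = (SOME grad. (\<forall>x. ((\<lambda>u. (ns u)\<^sup>2 / 2) has_derivative (\<lambda>v. grad x \<bullet> v)) (at x)) \<and>
     (\<forall>x y. (ns y)\<^sup>2 / 2 \<le> (ns x)\<^sup>2 / 2 + grad x \<bullet> (y - x) + L / 2 * (ns (x - y))\<^sup>2))"

lemma
  shows half_sq_ns_convex: "convex_on UNIV (\<lambda>u. (ns u)\<^sup>2 / 2)"
    and half_sq_ns_has_derivative: "((\<lambda>u. (ns u)\<^sup>2 / 2) has_derivative (\<lambda>v. sq_grad x \<bullet> v)) (at x)"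
    and half_sq_ns_smooth: "(ns y)\<^sup>2 / 2 \<le> (ns x)\<^sup>2 / 2 + sq_grad x \<bullet> (y - x) + L / 2 * (ns (x - y))\<^sup>2"
proof -
  show "convex_on UNIV (\<lambda>u. (ns u)\<^sup>2 / 2)" using smooth unfolding L_smooth_def by blast
  have "\<exists>grad. (\<forall>x. ((\<lambda>u. (ns u)\<^sup>2 / 2) has_derivative (\<lambda>v. grad x \<bullet> v)) (at x)) \<and>
     (\<forall>x y. (ns y)\<^sup>2 / 2 \<le> (ns x)\<^sup>2 / 2 + grad x \<bullet> (y - x) + L / 2 * (ns (x - y))\<^sup>2)"
    using smooth unfolding L_smooth_def by blast
  from someI_ex[OF this, folded sq_grad_def]
  show "((\<lambda>u. (ns u)\<^sup>2 / 2) has_derivative (\<lambda>v. sq_grad x \<bullet> v)) (at x)"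
    and "(ns y)\<^sup>2 / 2 \<le> (ns x)\<^sup>2 / 2 + sq_grad x \<bullet> (y - x) + L / 2 * (ns (x - y))\<^sup>2"
    by blast+
qed

text \<open>\<open>envelope\<close> is the generalized Moreau envelope \<open>M\<close> of the paper, the infimal convolution of
  \<open>\<parallel>u\<parallel>\<^sub>c\<^sup>2 / 2\<close> with \<open>\<parallel>u\<parallel>\<^sub>s\<^sup>2 / (2\<mu>)\<close>; its gradient is that of the second summand at \<open>z - prox z\<close>.\<close>

definition prox_obj :: "'a \<Rightarrow> 'a \<Rightarrow> real" where
  "prox_obj z u = (nc u)\<^sup>2 / 2 + (ns (z - u))\<^sup>2 / (2 * \<mu>)"

definition prox :: "'a \<Rightarrow> 'a" where
  "prox z = (SOME u. \<forall>v. prox_obj z u \<le> prox_obj z v)"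

definition envelope :: "'a \<Rightarrow> real" where
  "envelope z = prox_obj z (prox z)"

definition envelope_grad :: "'a \<Rightarrow> 'a" where
  "envelope_grad z = (1 / \<mu>) *\<^sub>R sq_grad (z - prox z)"

lemma prox_obj_attains_min: "\<exists>u. \<forall>v. prox_obj z u \<le> prox_obj z v"
proof -
  obtain c where c: "c > 0" "\<And>x. c * norm x \<le> nc x" using is_norm_ge_norm[OF nc_norm] by blast
  have "continuous_on UNIV (\<lambda>u. ns (z - u))"
    by (rule continuous_on_compose2[OF continuous_on_is_norm[OF ns_norm]]) (auto intro!: continuous_intros)
  then have cont: "continuous_on UNIV (prox_obj z)"
    using continuous_on_is_norm[OF nc_norm] mu_pos unfolding prox_obj_def[abs_def]
    by (auto intro!: continuous_intros)
  have P0: "prox_obj z 0 \<ge> 0" unfolding prox_obj_def using mu_pos by simp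
  define R where "R = sqrt (2 * prox_obj z 0) / c"
  have R0: "R \<ge> 0" unfolding R_def using P0 c by simp
  obtain u0 where u0: "u0 \<in> cball 0 R" "\<And>y. y \<in> cball 0 R \<Longrightarrow> prox_obj z u0 \<le> prox_obj z y"
    using continuous_attains_inf[OF compact_cball _ continuous_on_subset[OF cont subset_UNIV]] R0
    by (metis cball_eq_empty not_less)
  have "prox_obj z u0 \<le> prox_obj z v" for v
  proof (cases "v \<in> cball 0 R")
    case False
    then have "nc v > c * R" using c by (smt (verit) mem_cball_0 mult_strict_left_mono)
    moreover have "c * R = sqrt (2 * prox_obj z 0)" unfolding R_def using c by simp
    ultimately have "(nc v)\<^sup>2 > 2 * prox_obj z 0"
      using P0 by (smt (verit) real_sqrt_ge_zero real_sqrt_pow2 power_strict_mono zero_less_numeral)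
    moreover have "prox_obj z v \<ge> (nc v)\<^sup>2 / 2" unfolding prox_obj_def using mu_pos by simp
    moreover have "prox_obj z u0 \<le> prox_obj z 0" using u0(2)[of 0] R0 by simp
    ultimately show ?thesis by simp
  qed (use u0 in blast)
  then show ?thesis by blast
qed

lemma envelope_le: "envelope z \<le> prox_obj z v"
  using someI_ex[OF prox_obj_attains_min[of z]] unfolding envelope_def prox_def by blast

lemma envelope_nonneg: "envelope z \<ge> 0"
  unfolding envelope_def prox_obj_def using mu_pos by simp

lemma nc_sq_le_envelope: "(nc z)\<^sup>2 \<le> 2 * (1 + \<mu> / lcs\<^sup>2) * envelope z"
proof -
  define u where "u = prox z"
  define b where "b = lcs\<^sup>2 / \<mu>"
  have b: "b > 0" unfolding b_def using lcs_pos mu_pos by simp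
  have "(nc z)\<^sup>2 * (b / (1 + b)) \<le> (nc u)\<^sup>2 + b * (nc (z - u))\<^sup>2"
    using is_normD(1)[OF nc_norm, of z] is_normD(4)[OF nc_norm, of u "z - u"] b by (intro sq_le_weighted_sum_sq) auto
  also have "\<dots> \<le> (nc u)\<^sup>2 + (ns (z - u))\<^sup>2 / \<mu>"
  proof -
    have "(lcs * nc (z - u))\<^sup>2 \<le> (ns (z - u))\<^sup>2"
      using nc_ns_equiv[of "z - u"] lcs_pos is_normD(1)[OF nc_norm] by (intro power_mono) auto
    then show ?thesis unfolding b_def using mu_pos by (simp add: field_simps power_mult_distrib)
  qed
  also have "\<dots> = 2 * envelope z" unfolding envelope_def prox_obj_def u_def by (simp add: field_simps)
  finally have "(nc z)\<^sup>2 * (b / (1 + b)) * ((1 + b) / b) \<le> 2 * envelope z * ((1 + b) / b)"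
    using b by (intro mult_right_mono) auto
  moreover have "(nc z)\<^sup>2 * (b / (1 + b)) * ((1 + b) / b) = (nc z)\<^sup>2" using b by simp
  moreover have "2 * envelope z * ((1 + b) / b) = 2 * (1 + \<mu> / lcs\<^sup>2) * envelope z"
    unfolding b_def using lcs_pos mu_pos by (simp add: field_simps)
  ultimately show ?thesis by simp
qed

lemma envelope_le_nc_sq: "envelope z \<le> (nc z)\<^sup>2 / (2 * (1 + \<mu> / ucs\<^sup>2))"
proof -
  define b where "b = ucs\<^sup>2 / \<mu>"
  have b: "b > 0" unfolding b_def using ucs_pos mu_pos by simp
  define t where "t = b / (1 + b)"
  have t: "0 \<le> t" "t \<le> 1" "1 - t = 1 / (1 + b)" unfolding t_def using b by (auto simp: field_simps)
  have "envelope z \<le> prox_obj z (t *\<^sub>R z)" by (rule envelope_le)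
  also have "\<dots> = (t * nc z)\<^sup>2 / 2 + (ns ((1 - t) *\<^sub>R z))\<^sup>2 / (2 * \<mu>)"
    unfolding prox_obj_def using is_norm_scaleR_nonneg[OF nc_norm t(1)] by (simp add: algebra_simps)
  also have "\<dots> \<le> (t * nc z)\<^sup>2 / 2 + (ucs * ((1 - t) * nc z))\<^sup>2 / (2 * \<mu>)"
  proof -
    have "ns ((1 - t) *\<^sub>R z) \<le> ucs * ((1 - t) * nc z)"
      using nc_ns_equiv[of "(1 - t) *\<^sub>R z"] is_norm_scaleR_nonneg[OF nc_norm, of "1 - t"] t(2) by simp
    then show ?thesis using mu_pos is_normD(1)[OF ns_norm] by (simp add: power_mono divide_right_mono)
  qed
  also have "\<dots> = (nc z)\<^sup>2 / 2 * (t\<^sup>2 + b * (1 - t)\<^sup>2)"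
    unfolding b_def using mu_pos by (simp add: field_simps power_mult_distrib power2_eq_square)
  also have "t\<^sup>2 + b * (1 - t)\<^sup>2 = b * (1 + b) / ((1 + b) * (1 + b))"
    unfolding t(3) unfolding t_def using b by (simp add: power2_eq_square add_divide_distrib algebra_simps)
  also have "\<dots> = b / (1 + b)" using b by simp
  also have "(nc z)\<^sup>2 / 2 * (b / (1 + b)) = (nc z)\<^sup>2 / (2 * (1 + \<mu> / ucs\<^sup>2))"
    unfolding b_def using ucs_pos mu_pos by (simp add: field_simps)
  finally show ?thesis .
qed

lemma prox_obj_scaleR: "prox_obj (t *\<^sub>R z) (t *\<^sub>R u) = t\<^sup>2 * prox_obj z u"
proof -
  have "ns (t *\<^sub>R z - t *\<^sub>R u) = \<bar>t\<bar> * ns (z - u)"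
    using is_normD(3)[OF ns_norm, of t "z - u"] by (simp add: algebra_simps)
  then show ?thesis unfolding prox_obj_def using is_normD(3)[OF nc_norm]
    by (simp add: power_mult_distrib add_divide_distrib distrib_left)
qed

lemma envelope_scaleR: "envelope (t *\<^sub>R z) = t\<^sup>2 * envelope z"
proof -
  have le: "envelope (s *\<^sub>R y) \<le> s\<^sup>2 * envelope y" for s y
    using envelope_le[of "s *\<^sub>R y" "s *\<^sub>R prox y"] unfolding prox_obj_scaleR envelope_def .
  show ?thesis
  proof (cases "t = 0")
    case True
    have "envelope 0 \<le> prox_obj 0 0" by (rule envelope_le)
    then show ?thesis using True envelope_nonneg[of 0]
      by (simp add: prox_obj_def is_norm_zero[OF nc_norm] is_norm_zero[OF ns_norm])
  next
    case False
    have "envelope z = envelope ((1 / t) *\<^sub>R (t *\<^sub>R z))" using False by simp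
    also have "\<dots> \<le> envelope (t *\<^sub>R z) / t\<^sup>2" using le[of "1 / t" "t *\<^sub>R z"] by (simp add: power_divide)
    finally have "t\<^sup>2 * envelope z \<le> envelope (t *\<^sub>R z)" using False by (simp add: pos_le_divide_eq mult.commute)
    with le[of t z] show ?thesis by linarith
  qed
qed

lemma convex_on_half_sq_nc: "convex_on UNIV (\<lambda>u. (nc u)\<^sup>2 / 2)"
proof (rule convex_onI)
  fix t :: real and a b :: 'a
  assume t: "0 < t" "t < 1"
  have "nc ((1 - t) *\<^sub>R a + t *\<^sub>R b) \<le> (1 - t) * nc a + t * nc b"
    using is_normD(4)[OF nc_norm] is_norm_scaleR_nonneg[OF nc_norm] t by (smt (verit))
  then have "(nc ((1 - t) *\<^sub>R a + t *\<^sub>R b))\<^sup>2 \<le> ((1 - t) * nc a + t * nc b)\<^sup>2"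
    using is_normD(1)[OF nc_norm] by (simp add: power_mono)
  also have "\<dots> = (1 - t) * (nc a)\<^sup>2 + t * (nc b)\<^sup>2 - t * (1 - t) * (nc a - nc b)\<^sup>2"
    by (simp add: power2_eq_square algebra_simps)
  also have "\<dots> \<le> (1 - t) * (nc a)\<^sup>2 + t * (nc b)\<^sup>2" using t by simp
  finally show "(nc ((1 - t) *\<^sub>R a + t *\<^sub>R b))\<^sup>2 / 2 \<le> (1 - t) * ((nc a)\<^sup>2 / 2) + t * ((nc b)\<^sup>2 / 2)"
    by simp
qed simp

lemma envelope_grad_inner: "envelope_grad z \<bullet> v = (sq_grad (z - prox z) \<bullet> v) / \<mu>"
  unfolding envelope_grad_def by simp

lemma envelope_descent:
  "envelope y \<le> envelope z + envelope_grad z \<bullet> (y - z) + L / (2 * \<mu>) * (ns (y - z))\<^sup>2"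
proof -
  define u where "u = prox z"
  have "(ns (y - u))\<^sup>2 / 2 \<le> (ns (z - u))\<^sup>2 / 2 + sq_grad (z - u) \<bullet> (y - z) + L / 2 * (ns (y - z))\<^sup>2"
    using half_sq_ns_smooth[where x="z - u" and y="y - u"] is_norm_minus_commute[OF ns_norm, of z y] by simp
  then have "(ns (y - u))\<^sup>2 / 2 / \<mu>
      \<le> ((ns (z - u))\<^sup>2 / 2 + sq_grad (z - u) \<bullet> (y - z) + L / 2 * (ns (y - z))\<^sup>2) / \<mu>"
    using mu_pos by (intro divide_right_mono) auto
  moreover have "envelope y \<le> (nc u)\<^sup>2 / 2 + (ns (y - u))\<^sup>2 / 2 / \<mu>"
    using envelope_le[of y u] unfolding prox_obj_def by simp
  moreover have "(nc u)\<^sup>2 / 2 + ((ns (z - u))\<^sup>2 / 2 + sq_grad (z - u) \<bullet> (y - z) + L / 2 * (ns (y - z))\<^sup>2) / \<mu>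
      = envelope z + envelope_grad z \<bullet> (y - z) + L / (2 * \<mu>) * (ns (y - z))\<^sup>2"
    unfolding envelope_def prox_obj_def envelope_grad_inner u_def using mu_pos by (simp add: field_simps)
  ultimately show ?thesis by linarith
qed

lemma prox_optimality: "(nc (prox z))\<^sup>2 / 2 + envelope_grad z \<bullet> (v - prox z) \<le> (nc v)\<^sup>2 / 2"
proof -
  define u where "u = prox z"
  define h where "h = v - u"
  define G where "G = sq_grad (z - u)"
  let ?f = "\<lambda>u. (nc u)\<^sup>2 / 2" and ?g = "\<lambda>u. (ns u)\<^sup>2 / 2"
  have "?f u + (G \<bullet> h) / \<mu> \<le> ?f v + t * (L / (2 * \<mu>) * (ns h)\<^sup>2)" if t: "0 < t" "t < 1" for t
  proof -
    have obj: "prox_obj w x = ?f x + ?g (w - x) / \<mu>" for w x unfolding prox_obj_def by simp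
    have "?f u + ?g (z - u) / \<mu> \<le> ?f (u + t *\<^sub>R h) + ?g (z - (u + t *\<^sub>R h)) / \<mu>"
      using envelope_le[of z "u + t *\<^sub>R h"] unfolding envelope_def u_def obj .
    moreover have "?f (u + t *\<^sub>R h) \<le> (1 - t) * ?f u + t * ?f v"
      using convex_onD[OF convex_on_half_sq_nc, of t u v] t
      by (simp add: h_def algebra_simps)
    moreover have "?g (z - (u + t *\<^sub>R h)) \<le> ?g (z - u) - t * (G \<bullet> h) + L / 2 * (t\<^sup>2 * (ns h)\<^sup>2)"
      using half_sq_ns_smooth[where x="z - u" and y="z - (u + t *\<^sub>R h)"] is_norm_scaleR_nonneg[OF ns_norm, of t h] t
      unfolding G_def by (simp add: power_mult_distrib)
    then have "?g (z - (u + t *\<^sub>R h)) / \<mu> \<le> (?g (z - u) - t * (G \<bullet> h) + L / 2 * (t\<^sup>2 * (ns h)\<^sup>2)) / \<mu>"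
      using mu_pos by (intro divide_right_mono) auto
    ultimately have "?f u + ?g (z - u) / \<mu>
        \<le> (1 - t) * ?f u + t * ?f v + (?g (z - u) - t * (G \<bullet> h) + L / 2 * (t\<^sup>2 * (ns h)\<^sup>2)) / \<mu>"
      by linarith
    then have "t * (?f u + (G \<bullet> h) / \<mu>) \<le> t * (?f v + t * (L / (2 * \<mu>) * (ns h)\<^sup>2))"
      using mu_pos by (simp add: field_simps power2_eq_square)
    then show ?thesis using t by simp
  qed
  then have "?f u + (G \<bullet> h) / \<mu> \<le> ?f v" by (rule le_of_le_add_mult_small)
  then show ?thesis unfolding envelope_grad_inner u_def G_def h_def .
qed

lemma envelope_subgradient: "envelope z + envelope_grad z \<bullet> (y - z) \<le> envelope y"
proof -
  define u0 where "u0 = prox z"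
  define u where "u = prox y"
  have "(nc u0)\<^sup>2 / 2 + envelope_grad z \<bullet> (u - u0) \<le> (nc u)\<^sup>2 / 2"
    unfolding u0_def by (rule prox_optimality)
  moreover have "(ns (z - u0))\<^sup>2 / 2 + sq_grad (z - u0) \<bullet> ((y - u) - (z - u0)) \<le> (ns (y - u))\<^sup>2 / 2"
    by (rule convex_on_above_tangent[OF half_sq_ns_convex half_sq_ns_has_derivative])
  then have "(ns (z - u0))\<^sup>2 / (2 * \<mu>) + envelope_grad z \<bullet> ((y - u) - (z - u0)) \<le> (ns (y - u))\<^sup>2 / (2 * \<mu>)"
    using divide_right_mono[of _ _ \<mu>] mu_pos unfolding envelope_grad_inner u0_def
    by (fastforce simp: field_simps)
  moreover have "envelope_grad z \<bullet> (u - u0) + envelope_grad z \<bullet> ((y - u) - (z - u0)) = envelope_grad z \<bullet> (y - z)"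
    by (simp add: inner_diff_right inner_add_right)
  ultimately show ?thesis unfolding envelope_def prox_obj_def u0_def u_def by linarith
qed

text \<open>Euler's identity for the 2-homogeneous function \<open>envelope\<close>, derived from the descent and
  subgradient inequalities along the ray through \<open>z\<close>.\<close>
lemma envelope_grad_inner_self: "envelope_grad z \<bullet> z = 2 * envelope z"
proof (rule antisym)
  show "envelope_grad z \<bullet> z \<le> 2 * envelope z"
  proof (rule le_of_le_add_mult_small)
    fix s :: real assume s: "0 < s" "s < 1"
    have "(1 - s) *\<^sub>R z - z = (- s) *\<^sub>R z" by (simp add: algebra_simps)
    then have "envelope ((1 - s) *\<^sub>R z)
        \<le> envelope z - s * (envelope_grad z \<bullet> z) + s\<^sup>2 * (L / (2 * \<mu>) * (ns z)\<^sup>2)"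
      using envelope_descent[of "(1 - s) *\<^sub>R z" z] is_normD(3)[OF ns_norm, of "- s" z] s
      by (simp add: power_mult_distrib mult_ac)
    then have "s * (envelope_grad z \<bullet> z) \<le> s * (2 * envelope z + s * (L / (2 * \<mu>) * (ns z)\<^sup>2 - envelope z))"
      unfolding envelope_scaleR by (simp add: power2_eq_square algebra_simps)
    then show "envelope_grad z \<bullet> z \<le> 2 * envelope z + s * (L / (2 * \<mu>) * (ns z)\<^sup>2 - envelope z)"
      using s by simp
  qed
  show "2 * envelope z \<le> envelope_grad z \<bullet> z"
  proof (rule le_of_le_add_mult_small)
    fix s :: real assume s: "0 < s" "s < 1"
    have "envelope z + envelope_grad z \<bullet> ((1 - s) *\<^sub>R z - z) \<le> envelope ((1 - s) *\<^sub>R z)"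
      by (rule envelope_subgradient)
    moreover have "(1 - s) *\<^sub>R z - z = (- s) *\<^sub>R z" by (simp add: algebra_simps)
    ultimately have "envelope z - s * (envelope_grad z \<bullet> z) \<le> (1 - s)\<^sup>2 * envelope z"
      unfolding envelope_scaleR by simp
    then have "s * (2 * envelope z) \<le> s * (envelope_grad z \<bullet> z + s * envelope z)"
      by (simp add: power2_eq_square algebra_simps)
    then show "2 * envelope z \<le> envelope_grad z \<bullet> z + s * envelope z" using s by simp
  qed
qed

lemma envelope_grad_inner_le:
  assumes "s > 0"
  shows "s * (envelope_grad z \<bullet> y) \<le> s\<^sup>2 * envelope y + envelope z"
  using envelope_subgradient[of z "s *\<^sub>R y"] envelope_grad_inner_self[of z]
  by (simp add: envelope_scaleR inner_diff_right)

lemma abs_envelope_grad_inner_le: "\<bar>envelope_grad z \<bullet> y\<bar> \<le> envelope y + envelope z"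
  using envelope_grad_inner_le[of 1 z y] envelope_grad_inner_le[of 1 z "- y"]
    envelope_scaleR[of "- 1" y] by auto

text \<open>Test the smoothness inequality at \<open>0\<close> in the directions \<open>\<pm>b\<close>.\<close>
lemma smoothness_const_ge_one: "L \<ge> 1"
proof -
  obtain b :: 'a where "b \<in> Basis" using nonempty_Basis by blast
  then have nb: "ns b > 0" using is_normD(1,2)[OF ns_norm, of b] by fastforce
  have "(ns b)\<^sup>2 / 2 \<le> (ns 0)\<^sup>2 / 2 + sq_grad 0 \<bullet> (b - 0) + L / 2 * (ns (0 - b))\<^sup>2"
    and "(ns (- b))\<^sup>2 / 2 \<le> (ns 0)\<^sup>2 / 2 + sq_grad 0 \<bullet> (- b - 0) + L / 2 * (ns (0 - (- b)))\<^sup>2"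
    by (rule half_sq_ns_smooth)+
  then have "(ns b)\<^sup>2 \<le> L * (ns b)\<^sup>2"
    using is_norm_minus[OF ns_norm, of b] is_norm_zero[OF ns_norm] by simp
  then show ?thesis using nb by simp
qed

lemma continuous_on_envelope: "continuous_on UNIV envelope"
proof (rule continuous_at_imp_continuous_on, intro ballI)
  fix z :: 'a
  have "((\<lambda>y. ns (y - z)) \<longlongrightarrow> ns (z - z)) (at z)"
    using continuous_on_is_norm[OF ns_norm]
    by (intro isCont_tendsto_compose[of _ ns] tendsto_intros) (auto simp: continuous_on_eq_continuous_at)
  then have upper: "((\<lambda>y. envelope z + envelope_grad z \<bullet> (y - z) + L / (2 * \<mu>) * (ns (y - z))\<^sup>2) \<longlongrightarrow> envelope z) (at z)"
    using mu_pos by (auto intro!: tendsto_eq_intros simp: is_norm_zero[OF ns_norm])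
  have lower: "((\<lambda>y. envelope z + envelope_grad z \<bullet> (y - z)) \<longlongrightarrow> envelope z) (at z)"
    by (auto intro!: tendsto_eq_intros)
  have "(envelope \<longlongrightarrow> envelope z) (at z)"
    by (rule tendsto_sandwich[OF _ _ lower upper])
      (intro always_eventually allI envelope_subgradient envelope_descent)+
  then show "isCont envelope z" unfolding isCont_def .
qed

lemma borel_measurable_envelope[measurable]: "envelope \<in> borel_measurable borel"
  using continuous_on_envelope by (rule borel_measurable_continuous_onI)

text \<open>Each component of the gradient is a pointwise limit of difference quotients.\<close>
lemma borel_measurable_envelope_grad_inner[measurable]:
  "(\<lambda>z. envelope_grad z \<bullet> b) \<in> borel_measurable borel"
proof (rule borel_measurable_LIMSEQ_real)
  fix z :: 'a
  define C where "C = L / (2 * \<mu>) * (ns b)\<^sup>2"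
  let ?q = "\<lambda>n. real n * (envelope (z + (1 / real n) *\<^sub>R b) - envelope z)"
  have bounds: "envelope_grad z \<bullet> b \<le> ?q n \<and> ?q n \<le> envelope_grad z \<bullet> b + (1 / real n) * C"
    if "n \<ge> 1" for n
  proof
    have n: "real n > 0" using that by simp
    have "(1 / real n) * (envelope_grad z \<bullet> b) \<le> envelope (z + (1 / real n) *\<^sub>R b) - envelope z"
      using envelope_subgradient[of z "z + (1 / real n) *\<^sub>R b"] by simp
    then have "real n * ((1 / real n) * (envelope_grad z \<bullet> b)) \<le> ?q n"
      using n by (simp only: mult_le_cancel_left_pos)
    then show "envelope_grad z \<bullet> b \<le> ?q n" using n by simp
    have "ns ((1 / real n) *\<^sub>R b) = (1 / real n) * ns b"
      using is_norm_scaleR_nonneg[OF ns_norm] n by simp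
    then have "envelope (z + (1 / real n) *\<^sub>R b) - envelope z \<le> (1 / real n) * (envelope_grad z \<bullet> b + (1 / real n) * C)"
      using envelope_descent[of "z + (1 / real n) *\<^sub>R b" z]
      unfolding C_def by (simp add: power_mult_distrib power2_eq_square algebra_simps)
    then have "?q n \<le> real n * ((1 / real n) * (envelope_grad z \<bullet> b + (1 / real n) * C))"
      using n by (simp only: mult_le_cancel_left_pos)
    then show "?q n \<le> envelope_grad z \<bullet> b + (1 / real n) * C" using n by simp
  qed
  have "(\<lambda>n. envelope_grad z \<bullet> b + (1 / real n) * C) \<longlonglongrightarrow> envelope_grad z \<bullet> b + 0 * C"
    by (intro tendsto_intros)
  moreover have "\<forall>\<^sub>F n in sequentially. envelope_grad z \<bullet> b \<le> ?q n"
    and "\<forall>\<^sub>F n in sequentially. ?q n \<le> envelope_grad z \<bullet> b + (1 / real n) * C"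
    using bounds unfolding eventually_sequentially by blast+
  ultimately show "?q \<longlonglongrightarrow> envelope_grad z \<bullet> b"
    using tendsto_sandwich[OF _ _ tendsto_const] by simp
qed measurable

definition \<alpha>1 :: real where
  "\<alpha>1 = (1 + \<mu> / lcs\<^sup>2) / (1 + \<mu> / ucs\<^sup>2)"

lemma \<alpha>1_pos: "\<alpha>1 > 0"
  unfolding \<alpha>1_def using mu_pos lcs_pos ucs_pos by (simp add: add_pos_pos)

lemma envelope_contraction:
  assumes "nc y \<le> \<gamma> * nc z" "0 \<le> \<gamma>"
  shows "envelope y \<le> \<gamma>\<^sup>2 * \<alpha>1 * envelope z"
proof -
  have U: "2 * (1 + \<mu> / ucs\<^sup>2) > 0" using mu_pos ucs_pos by (simp add: add_pos_pos)
  have "envelope y \<le> (nc y)\<^sup>2 / (2 * (1 + \<mu> / ucs\<^sup>2))" by (rule envelope_le_nc_sq)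
  also have "\<dots> \<le> \<gamma>\<^sup>2 * ((nc z)\<^sup>2 / (2 * (1 + \<mu> / ucs\<^sup>2)))"
    using assms is_normD(1)[OF nc_norm, of y] U
    by (simp add: divide_right_mono power_mono flip: power_mult_distrib)
  also have "\<dots> \<le> \<gamma>\<^sup>2 * ((2 * (1 + \<mu> / lcs\<^sup>2) * envelope z) / (2 * (1 + \<mu> / ucs\<^sup>2)))"
    using nc_sq_le_envelope[of z] U by (intro divide_right_mono mult_left_mono) auto
  also have "\<dots> = \<gamma>\<^sup>2 * \<alpha>1 * envelope z"
  proof -
    have "2 * X * E / (2 * Y) = X / Y * E" for X Y E :: real by simp
    then show ?thesis unfolding \<alpha>1_def by (simp only: mult.assoc)
  qed
  finally show ?thesis .
qed

lemma envelope_grad_inner_contraction: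
  assumes "nc y \<le> \<gamma> * nc z" "0 < \<gamma>"
  shows "envelope_grad z \<bullet> y \<le> 2 * (\<gamma> * sqrt \<alpha>1) * envelope z"
proof -
  define s where "s = 1 / (\<gamma> * sqrt \<alpha>1)"
  have pos: "\<gamma> * sqrt \<alpha>1 > 0" using assms \<alpha>1_pos by simp
  then have s: "s > 0" "s\<^sup>2 * (\<gamma>\<^sup>2 * \<alpha>1) = 1"
    unfolding s_def using \<alpha>1_pos by (auto simp: power_divide power_mult_distrib)
  have "s * (envelope_grad z \<bullet> y) \<le> s\<^sup>2 * envelope y + envelope z"
    by (rule envelope_grad_inner_le[OF s(1)])
  also have "s\<^sup>2 * envelope y \<le> s\<^sup>2 * (\<gamma>\<^sup>2 * \<alpha>1 * envelope z)"
    using envelope_contraction[OF assms(1)] assms(2) by (simp add: mult_left_mono)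
  finally have "s * (envelope_grad z \<bullet> y) \<le> 2 * envelope z" using s(2) by (simp add: mult.assoc[symmetric])
  then show ?thesis using s(1) pos unfolding s_def by (simp add: field_simps)
qed

lemma ns_sq_diff_le_envelope:
  assumes "nc y \<le> \<gamma> * nc z" "\<gamma> \<le> 1"
  shows "(ns (y - z))\<^sup>2 \<le> 8 * ucs\<^sup>2 * (1 + \<mu> / lcs\<^sup>2) * envelope z"
proof -
  have "nc y + nc z \<le> 2 * nc z"
    using assms is_normD(1)[OF nc_norm, of z] mult_right_mono[of \<gamma> 1 "nc z"] by linarith
  then have "ns (y - z) \<le> ucs * (2 * nc z)"
    using nc_ns_equiv[of "y - z"] is_norm_diff_le[OF nc_norm, of y z] ucs_pos
    by (smt (verit) mult_left_mono)
  then have "(ns (y - z))\<^sup>2 \<le> (ucs * (2 * nc z))\<^sup>2"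
    using is_normD(1)[OF ns_norm] by (intro power_mono) auto
  also have "\<dots> = 4 * ucs\<^sup>2 * (nc z)\<^sup>2" by (simp add: power_mult_distrib)
  also have "\<dots> \<le> 4 * ucs\<^sup>2 * (2 * (1 + \<mu> / lcs\<^sup>2) * envelope z)"
    using nc_sq_le_envelope[of z] by (simp add: mult_left_mono)
  also have "\<dots> = 8 * ucs\<^sup>2 * (1 + \<mu> / lcs\<^sup>2) * envelope z" by simp
  finally show ?thesis .
qed

lemma integrable_nc_sq_of_envelope:
  assumes int: "integrable M (\<lambda>\<omega>. envelope (f \<omega>))" and [measurable]: "f \<in> borel_measurable M"
  shows "integrable M (\<lambda>\<omega>. (nc (f \<omega>))\<^sup>2)"
proof (rule Bochner_Integration.integrable_bound[OF integrable_mult_right[OF int, of "2 * (1 + \<mu> / lcs\<^sup>2)"]])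
  have [measurable]: "nc \<in> borel_measurable borel" by (rule borel_measurable_is_norm[OF nc_norm])
  show "(\<lambda>\<omega>. (nc (f \<omega>))\<^sup>2) \<in> borel_measurable M" by measurable
  show "AE \<omega> in M. norm ((nc (f \<omega>))\<^sup>2) \<le> norm (2 * (1 + \<mu> / lcs\<^sup>2) * envelope (f \<omega>))"
    using nc_sq_le_envelope envelope_nonneg mu_pos lcs_pos by (intro AE_I2) (simp add: abs_of_nonneg add_pos_pos)
qed

text \<open>In the iteration, \<open>z = x\<^sub>k - x\<^sup>*\<close>, \<open>y = H(x\<^sub>k) - x\<^sup>*\<close> and \<open>w = w\<^sub>k\<close>.\<close>
lemma envelope_sa_step:
  assumes y: "nc y \<le> \<gamma> * nc z" and \<gamma>: "0 < \<gamma>" "\<gamma> \<le> 1" and \<epsilon>: "0 \<le> \<epsilon>"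
  shows "envelope (z + \<epsilon> *\<^sub>R ((y - z) + w))
    \<le> (1 - 2 * (1 - \<gamma> * sqrt \<alpha>1) * \<epsilon> + \<epsilon>\<^sup>2 * (L / \<mu>) * (8 * ucs\<^sup>2 * (1 + \<mu> / lcs\<^sup>2))) * envelope z
       + \<epsilon> * (envelope_grad z \<bullet> w) + (L / \<mu>) * \<epsilon>\<^sup>2 * (ns w)\<^sup>2"
proof -
  define v where "v = (y - z) + w"
  define c where "c = 8 * ucs\<^sup>2 * (1 + \<mu> / lcs\<^sup>2)"
  have Lmu: "L / (2 * \<mu>) \<ge> 0" using smoothness_const_ge_one mu_pos by simp
  have "(ns v)\<^sup>2 \<le> (ns (y - z) + ns w)\<^sup>2"
    unfolding v_def using is_normD(1,4)[OF ns_norm] by (simp add: power_mono)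
  also have "\<dots> \<le> 2 * (ns (y - z))\<^sup>2 + 2 * (ns w)\<^sup>2"
    by (smt (verit) zero_le_power2 power2_diff power2_sum)
  also have "\<dots> \<le> 2 * (c * envelope z) + 2 * (ns w)\<^sup>2"
    using ns_sq_diff_le_envelope[OF y \<gamma>(2)] unfolding c_def by linarith
  finally have "\<epsilon>\<^sup>2 * (ns v)\<^sup>2 \<le> \<epsilon>\<^sup>2 * (2 * (c * envelope z) + 2 * (ns w)\<^sup>2)"
    by (simp add: mult_left_mono)
  then have "L / (2 * \<mu>) * (\<epsilon> * ns v)\<^sup>2 \<le> L / (2 * \<mu>) * \<epsilon>\<^sup>2 * (2 * (c * envelope z) + 2 * (ns w)\<^sup>2)"
    using mult_left_mono[OF _ Lmu] by (simp add: power_mult_distrib mult.assoc)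
  moreover have "\<epsilon> * (envelope_grad z \<bullet> y) - \<epsilon> * (envelope_grad z \<bullet> z)
      \<le> \<epsilon> * (2 * (\<gamma> * sqrt \<alpha>1) * envelope z - 2 * envelope z)"
    using envelope_grad_inner_contraction[OF y \<gamma>(1)] envelope_grad_inner_self[of z] \<epsilon>
    by (simp add: right_diff_distrib[symmetric] mult_left_mono)
  moreover have "envelope (z + \<epsilon> *\<^sub>R v) \<le> envelope z + \<epsilon> * (envelope_grad z \<bullet> y)
      - \<epsilon> * (envelope_grad z \<bullet> z) + \<epsilon> * (envelope_grad z \<bullet> w) + L / (2 * \<mu>) * (\<epsilon> * ns v)\<^sup>2"
    using envelope_descent[of "z + \<epsilon> *\<^sub>R v" z] is_norm_scaleR_nonneg[OF ns_norm \<epsilon>, of v]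
    unfolding v_def by (simp add: inner_diff_right inner_add_right algebra_simps)
  ultimately have "envelope (z + \<epsilon> *\<^sub>R v) \<le> envelope z + \<epsilon> * (2 * (\<gamma> * sqrt \<alpha>1) * envelope z - 2 * envelope z)
      + \<epsilon> * (envelope_grad z \<bullet> w) + L / (2 * \<mu>) * \<epsilon>\<^sup>2 * (2 * (c * envelope z) + 2 * (ns w)\<^sup>2)"
    by linarith
  also have "\<dots> = (1 - 2 * (1 - \<gamma> * sqrt \<alpha>1) * \<epsilon> + \<epsilon>\<^sup>2 * (L / \<mu>) * c) * envelope z
       + \<epsilon> * (envelope_grad z \<bullet> w) + (L / \<mu>) * \<epsilon>\<^sup>2 * (ns w)\<^sup>2"
  proof -
    have "E + \<epsilon> * (2 * a * E - 2 * E) + g + L / (2 * \<mu>) * \<epsilon>\<^sup>2 * (2 * (c * E) + 2 * q)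
        = (1 - 2 * (1 - a) * \<epsilon> + \<epsilon>\<^sup>2 * (L / \<mu>) * c) * E + g + (L / \<mu>) * \<epsilon>\<^sup>2 * q" for E a g q
      using mu_pos by (simp add: field_simps)
    then show ?thesis .
  qed
  finally show ?thesis unfolding v_def c_def .
qed

end

section \<open>Conditional expectations\<close>

lemma
  fixes M :: "'w measure" and x w :: "nat \<Rightarrow> 'w \<Rightarrow> 'a::topological_space"
  assumes x: "\<And>i. x i \<in> borel_measurable M" and w: "\<And>i. w i \<in> borel_measurable M"
  shows subalgebra_gen_filtr: "subalgebra M (gen_filtr M x w k)"
    and measurable_gen_filtr: "x k \<in> borel_measurable (gen_filtr M x w k)"
proof -
  define G where "G = (\<Union>i\<in>{..k}. {x i -` B \<inter> space M | B. B \<in> sets borel})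
      \<union> (\<Union>i\<in>{..<k}. {w i -` B \<inter> space M | B. B \<in> sets borel})"
  have "G \<subseteq> Pow (space M)" unfolding G_def by auto
  then have space: "space (gen_filtr M x w k) = space M"
    and sets: "sets (gen_filtr M x w k) = sigma_sets (space M) G"
    unfolding gen_filtr_def G_def[symmetric] by (simp_all add: space_measure_of sets_measure_of)
  have "G \<subseteq> sets M" unfolding G_def using measurable_sets[OF x] measurable_sets[OF w] by auto
  then show "subalgebra M (gen_filtr M x w k)"
    unfolding subalgebra_def space sets using sets.sigma_sets_subset by simp
  show "x k \<in> borel_measurable (gen_filtr M x w k)"
  proof (rule measurableI)
    fix A :: "'a set" assume "A \<in> sets borel"
    then have "x k -` A \<inter> space M \<in> G" unfolding G_def by blast
    then show "x k -` A \<inter> space (gen_filtr M x w k) \<in> sets (gen_filtr M x w k)"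
      unfolding space sets by (rule sigma_sets.Basic)
  qed simp
qed

context sigma_finite_subalgebra
begin

lemma integral_le_of_nn_cond_exp_le:
  fixes f h :: "'a \<Rightarrow> real"
  assumes [measurable]: "f \<in> borel_measurable M" and h: "integrable M h"
    and nonneg: "\<And>x. 0 \<le> f x" "\<And>x. 0 \<le> h x"
    and le: "AE x in M. nn_cond_exp M F (\<lambda>x. ennreal (f x)) x \<le> ennreal (h x)"
  shows "integrable M f" and "(\<integral>x. f x \<partial>M) \<le> (\<integral>x. h x \<partial>M)"
proof -
  have "(\<integral>\<^sup>+x. ennreal (f x) \<partial>M) = (\<integral>\<^sup>+x. 1 * nn_cond_exp M F (\<lambda>x. ennreal (f x)) x \<partial>M)"
    by (subst nn_cond_exp_intg) simp_all
  also have "\<dots> \<le> (\<integral>\<^sup>+x. ennreal (h x) \<partial>M)"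
    using le by (intro nn_integral_mono_AE) auto
  also have "\<dots> = ennreal (\<integral>x. h x \<partial>M)"
    using h nonneg(2) by (intro nn_integral_eq_integral) auto
  finally have nn: "(\<integral>\<^sup>+x. ennreal (f x) \<partial>M) \<le> ennreal (\<integral>x. h x \<partial>M)" .
  then show f: "integrable M f"
    by (intro integrableI_nonneg) (auto simp: nonneg(1) top.not_eq_extremum intro: le_less_trans)
  have "ennreal (\<integral>x. f x \<partial>M) = (\<integral>\<^sup>+x. ennreal (f x) \<partial>M)"
    using f nonneg(1) by (intro nn_integral_eq_integral[symmetric]) auto
  with nn have "ennreal (\<integral>x. f x \<partial>M) \<le> ennreal (\<integral>x. h x \<partial>M)" by simp
  moreover have "0 \<le> (\<integral>x. h x \<partial>M)" using nonneg(2) by (simp add: integral_nonneg_AE)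
  ultimately show "(\<integral>x. f x \<partial>M) \<le> (\<integral>x. h x \<partial>M)" by (rule ennreal_le_iff[THEN iffD1, rotated])
qed

lemma integral_mult_eq_zero_of_real_cond_exp:
  fixes f g :: "'a \<Rightarrow> real"
  assumes "integrable M (\<lambda>x. f x * g x)" "f \<in> borel_measurable F" "g \<in> borel_measurable M"
    and "AE x in M. real_cond_exp M F g x = 0"
  shows "(\<integral>x. f x * g x \<partial>M) = 0"
proof -
  have "(\<integral>x. f x * g x \<partial>M) = (\<integral>x. f x * real_cond_exp M F g x \<partial>M)"
    using real_cond_exp_intg(2)[OF assms(1-3)] by simp
  also have "\<dots> = 0"
    using assms(4) by (intro integral_eq_zero_AE) (auto elim!: AE_mp)
  finally show ?thesis .
qed

end

section \<open>Linear recursions and step-size estimates\<close>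

definition damped_sq_sum :: "real \<Rightarrow> (nat \<Rightarrow> real) \<Rightarrow> nat \<Rightarrow> real" where
  "damped_sq_sum a e k = (\<Sum>i<k. (e i)\<^sup>2 * (\<Prod>j\<in>{Suc i..<k}. 1 - a * e j))"

lemma damped_sq_sum_0 [simp]: "damped_sq_sum a e 0 = 0"
  by (simp add: damped_sq_sum_def)

lemma damped_sq_sum_Suc:
  "damped_sq_sum a e (Suc k) = (1 - a * e k) * damped_sq_sum a e k + (e k)\<^sup>2"
proof -
  have "(\<Sum>i<k. (e i)\<^sup>2 * (\<Prod>j\<in>{Suc i..<Suc k}. 1 - a * e j))
      = (\<Sum>i<k. (1 - a * e k) * ((e i)\<^sup>2 * (\<Prod>j\<in>{Suc i..<k}. 1 - a * e j)))"
    by (intro sum.cong refl) (simp add: prod.atLeastLessThan_Suc)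
  then show ?thesis by (simp add: damped_sq_sum_def sum_distrib_left)
qed

lemma linear_recursion_le:
  fixes E e :: "nat \<Rightarrow> real"
  assumes step: "\<And>k. E (Suc k) \<le> (1 - a * e k) * E k + (e k)\<^sup>2 * D"
    and nonneg: "\<And>k. 0 \<le> 1 - a * e k"
  shows "E k \<le> (\<Prod>j<k. 1 - a * e j) * E 0 + D * damped_sq_sum a e k"
proof (induction k)
  case (Suc k)
  have "E (Suc k) \<le> (1 - a * e k) * ((\<Prod>j<k. 1 - a * e j) * E 0 + D * damped_sq_sum a e k) + (e k)\<^sup>2 * D"
    using step[of k] mult_left_mono[OF Suc.IH nonneg[of k]] by linarith
  also have "\<dots> = (\<Prod>j<Suc k. 1 - a * e j) * E 0 + D * damped_sq_sum a e (Suc k)"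
    by (simp add: damped_sq_sum_Suc algebra_simps)
  finally show ?case .
qed simp

lemma one_minus_inverse_le_ln:
  fixes x :: real
  assumes "x > 0"
  shows "1 - 1 / x \<le> ln x"
  using ln_diff_le[of 1 x] assms by (simp add: diff_divide_distrib)

lemma one_minus_div_le_powr:
  fixes t c :: real
  assumes "t > 0" "c \<ge> 0"
  shows "1 - c / t \<le> (t / (t + 1)) powr c"
proof -
  have p: "t / (t + 1) > 0" using assms by simp
  have "1 - (t + 1) / t \<le> ln (t / (t + 1))" using one_minus_inverse_le_ln[OF p] by simp
  moreover have "1 - (t + 1) / t = - (1 / t)" using assms by (simp add: field_simps)
  ultimately have "- c / t \<le> c * ln (t / (t + 1))" using assms(2)
    by (metis minus_divide_left mult_left_mono times_divide_eq_right mult.right_neutral mult_minus_right)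
  then have "1 - c / t \<le> 1 + c * ln (t / (t + 1))" by simp
  also have "\<dots> \<le> exp (c * ln (t / (t + 1)))" by (rule exp_ge_add_one_self)
  also have "\<dots> = (t / (t + 1)) powr c" using p assms by (simp add: powr_def mult.commute)
  finally show ?thesis .
qed

lemma one_add_mult_div_le_powr:
  fixes x p :: real
  assumes "x \<ge> 0" "p \<ge> 0"
  shows "1 + p * (x / (1 + x)) \<le> (1 + x) powr p"
proof -
  have p: "1 + x > 0" using assms by simp
  have "1 - 1 / (1 + x) \<le> ln (1 + x)" by (rule one_minus_inverse_le_ln[OF p])
  moreover have "1 - 1 / (1 + x) = x / (1 + x)" using p by (simp add: field_simps)
  ultimately have h: "x / (1 + x) \<le> ln (1 + x)" by simp
  have "p * (x / (1 + x)) \<le> p * ln (1 + x)" using h assms(2) by (rule mult_left_mono)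
  then have "1 + p * (x / (1 + x)) \<le> 1 + p * ln (1 + x)" by simp
  also have "\<dots> \<le> exp (p * ln (1 + x))" by (rule exp_ge_add_one_self)
  also have "\<dots> = (1 + x) powr p" using p by (simp add: powr_def mult.commute)
  finally show ?thesis .
qed

lemma powr_le_one_add_mult:
  fixes x q :: real
  assumes "x \<ge> 0" "0 \<le> q" "q \<le> 1"
  shows "(1 + x) powr q \<le> 1 + q * x"
  using Youngs_inequality_0[of q "1 - q" "1 + x" 1] assms by (simp add: algebra_simps)

lemma prod_one_minus_harmonic_le:
  fixes K c :: real
  assumes K: "K > 0" and c: "0 \<le> c" "c \<le> K" and ik: "i \<le> k"
  shows "(\<Prod>j\<in>{i..<k}. 1 - c / (real j + K)) \<le> ((real i + K) / (real k + K)) powr c"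
  using ik
proof (induction k rule: dec_induct)
  case (step n)
  have t: "real n + K > 0" using K by simp
  have "0 \<le> 1 - c / (real n + K)" using c t by (simp add: field_simps)
  then have "(\<Prod>j\<in>{i..<Suc n}. 1 - c / (real j + K))
      \<le> ((real i + K) / (real n + K)) powr c * ((real n + K) / (real n + K + 1)) powr c"
    using step one_minus_div_le_powr[OF t c(1)]
    by (simp add: prod.atLeastLessThan_Suc) (intro mult_mono, auto)
  also have "\<dots> = ((real i + K) / (real n + K) * ((real n + K) / (real n + K + 1))) powr c"
    using K by (simp add: powr_mult[symmetric])
  also have "(real i + K) / (real n + K) * ((real n + K) / (real n + K + 1)) = (real i + K) / (real (Suc n) + K)"
  proof -
    have "b \<noteq> 0 \<Longrightarrow> a / b * (b / d) = a / d" for a b d :: real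
      by (cases "d = 0") (simp_all add: field_simps)
    then show ?thesis using t by (simp add: add_ac)
  qed
  finally show ?case .
qed (use K in simp)

lemma damped_sq_sum_harmonic_le:
  fixes K a \<epsilon> :: real
  assumes c: "0 \<le> a * \<epsilon>" "a * \<epsilon> \<le> K" and K: "K > 0"
  shows "damped_sq_sum a (\<lambda>j. \<epsilon> / (real j + K)) k
    \<le> \<epsilon>\<^sup>2 / (real k + K) powr (a * \<epsilon>) * (\<Sum>i<k. (real i + 1 + K) powr (a * \<epsilon>) / (real i + K)\<^sup>2)"
  unfolding damped_sq_sum_def sum_distrib_left
proof (rule sum_mono)
  fix i assume "i \<in> {..<k}"
  then have "(\<Prod>j\<in>{Suc i..<k}. 1 - a * (\<epsilon> / (real j + K))) \<le> ((real (Suc i) + K) / (real k + K)) powr (a * \<epsilon>)"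
    using prod_one_minus_harmonic_le[OF K c, of "Suc i" k] by simp
  then have "(\<epsilon> / (real i + K))\<^sup>2 * (\<Prod>j\<in>{Suc i..<k}. 1 - a * (\<epsilon> / (real j + K)))
      \<le> (\<epsilon> / (real i + K))\<^sup>2 * ((real (Suc i) + K) / (real k + K)) powr (a * \<epsilon>)"
    by (rule mult_left_mono) simp
  also have "\<dots> = \<epsilon>\<^sup>2 / (real k + K) powr (a * \<epsilon>) * ((real i + 1 + K) powr (a * \<epsilon>) / (real i + K)\<^sup>2)"
    using K by (simp add: powr_divide power_divide add_ac)
  finally show "(\<epsilon> / (real i + K))\<^sup>2 * (\<Prod>j\<in>{Suc i..<k}. 1 - a * (\<epsilon> / (real j + K)))
      \<le> \<epsilon>\<^sup>2 / (real k + K) powr (a * \<epsilon>) * ((real i + 1 + K) powr (a * \<epsilon>) / (real i + K)\<^sup>2)" .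
qed

lemma powr_neg_diff_ge:
  fixes u p :: real
  assumes u: "u > 0" and p: "p > 0"
  shows "p * (u + 1) powr (- p - 1) \<le> u powr (- p) - (u + 1) powr (- p)"
proof -
  define A where "A = (u + 1) powr (- p)"
  have A0: "A > 0" unfolding A_def using u by simp
  have e1: "u powr (- p) = A * ((1 + 1 / u) powr p)"
  proof -
    have "(1 + 1 / u) = (u + 1) / u" using u by (simp add: field_simps)
    then have "(1 + 1 / u) powr p = (u + 1) powr p / u powr p" using u by (simp add: powr_divide)
    then show ?thesis unfolding A_def using u by (simp add: powr_minus field_simps)
  qed
  have "1 + p * ((1 / u) / (1 + 1 / u)) \<le> (1 + 1 / u) powr p" by (rule one_add_mult_div_le_powr) (use u p in auto)
  moreover have "(1 / u) / (1 + 1 / u) = 1 / (u + 1)" using u by (simp add: field_simps)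
  ultimately have "A * (1 + p / (u + 1)) \<le> u powr (- p)" unfolding e1 using A0 by (simp add: mult_left_mono)
  then have "A * p / (u + 1) \<le> u powr (- p) - A" by (simp add: algebra_simps)
  moreover have "A * p / (u + 1) = p * (u + 1) powr (- p - 1)"
    unfolding A_def using u by (simp add: powr_diff powr_minus field_simps)
  ultimately show ?thesis unfolding A_def by simp
qed

lemma powr_diff_ge:
  fixes u q :: real
  assumes u: "u \<ge> 1" and q: "q > 0"
  shows "q / 2 * u powr (q - 1) \<le> (u + 1) powr q - u powr q"
proof -
  have u0: "u > 0" using u by simp
  have e1: "(u + 1) powr q = u powr q * (1 + 1 / u) powr q"
  proof -
    have "u + 1 = u * (1 + 1 / u)" using u0 by (simp add: field_simps)
    moreover have "(u * (1 + 1 / u)) powr q = u powr q * (1 + 1 / u) powr q" using u0 powr_mult[of u "1 + 1/u" q] by simp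
    ultimately show ?thesis by simp
  qed
  have "1 + q * ((1 / u) / (1 + 1 / u)) \<le> (1 + 1 / u) powr q" by (rule one_add_mult_div_le_powr) (use u0 q in auto)
  moreover have "(1 / u) / (1 + 1 / u) = 1 / (u + 1)" using u0 by (simp add: field_simps)
  moreover have "q * (1 / (2 * u)) \<le> q * (1 / (u + 1))" using u q by (intro mult_left_mono) (auto simp: field_simps)
  ultimately have "1 + q / (2 * u) \<le> (1 + 1 / u) powr q" by simp
  then have "u powr q * (1 + q / (2 * u)) \<le> (u + 1) powr q" unfolding e1 using u0 by (simp add: mult_left_mono)
  moreover have "u powr q * (q / (2 * u)) = q / 2 * u powr (q - 1)" using u0 by (simp add: powr_diff field_simps)
  moreover have "u powr q * (1 + q / (2 * u)) = u powr q + u powr q * (q / (2 * u))" by (simp only: distrib_left mult_1_right)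
  ultimately show ?thesis by linarith
qed

lemma harmonic_weight_le:
  fixes t c :: real
  assumes t: "1 \<le> t" and c: "0 \<le> c" "c \<le> 1"
  shows "(t + 1) powr c / t\<^sup>2 \<le> 2 * t powr (c - 2)"
proof -
  have "(t + 1) powr c \<le> (2 * t) powr c" using t c by (intro powr_mono2) auto
  also have "\<dots> = 2 powr c * t powr c" using t by (simp add: powr_mult)
  also have "\<dots> \<le> 2 * t powr c" using powr_mono[of c 1 2] c by (intro mult_right_mono) auto
  finally show ?thesis using t by (simp add: divide_right_mono powr_diff powr_numeral)
qed

lemma harmonic_weight_sum_lt_one:
  fixes K c :: real
  assumes K: "K \<ge> 1" and c: "0 < c" "c < 1"
  shows "(\<Sum>i<k. (real i + 1 + K) powr c / (real i + K)\<^sup>2) \<le> 4 / (1 - c)"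
proof -
  define f where "f i = (real i + 1 + K) powr c / (real i + K)\<^sup>2" for i
  have fb: "f i \<le> 2 * (real i + K) powr (c - 2)" for i
    unfolding f_def using harmonic_weight_le[of "real i + K" c] K c by (simp add: add_ac)
  have claim: "(\<Sum>i<Suc k. f i) \<le> 2 + 2 * (K powr (c - 1) - (real k + K) powr (c - 1)) / (1 - c)" for k
  proof (induction k)
    case 0
    have "K powr (c - 2) \<le> K powr 0" using K c by (intro powr_mono) auto
    then show ?case using fb[of 0] K by simp
  next
    case (Suc k)
    have u: "real k + K > 0" using K by simp
    have td: "(1 - c) * (real k + K + 1) powr (- (1 - c) - 1) \<le> (real k + K) powr (- (1 - c)) - (real k + K + 1) powr (- (1 - c))"
      by (rule powr_neg_diff_ge[OF u]) (use c in simp)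
    have "f (Suc k) \<le> 2 * (real k + K + 1) powr (c - 2)" using fb[of "Suc k"] by (simp add: add_ac)
    also have "\<dots> \<le> 2 * (((real k + K) powr (c - 1) - (real k + K + 1) powr (c - 1)) / (1 - c))"
      using td c by (simp add: field_simps)
    finally have "f (Suc k) \<le> 2 * ((real k + K) powr (c - 1) - (real k + K + 1) powr (c - 1)) / (1 - c)" by simp
    then show ?case using Suc.IH c by (simp add: field_simps add_ac)
  qed
  show ?thesis
  proof (cases k)
    case 0 then show ?thesis using c by simp
  next
    case (Suc m)
    have a: "K powr (c - 1) \<le> 1" using K c powr_mono[of "c - 1" 0 K] by simp
    have b: "0 \<le> (real m + K) powr (c - 1)" by simp
    have "(\<Sum>i<k. f i) \<le> 2 + 2 * (K powr (c - 1) - (real m + K) powr (c - 1)) / (1 - c)"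
      using claim[of m] Suc by simp
    also have "\<dots> \<le> 2 + 2 / (1 - c)"
    proof -
      have "2 * (K powr (c - 1) - (real m + K) powr (c - 1)) \<le> 2" using a b by (smt (verit))
      then show ?thesis using c by (intro add_left_mono divide_right_mono) auto
    qed
    also have "\<dots> \<le> 4 / (1 - c)" using c by (simp add: field_simps)
    finally show ?thesis unfolding f_def .
  qed
qed

lemma harmonic_weight_sum_one:
  fixes K :: real
  assumes K: "K \<ge> 2"
  shows "(\<Sum>i<k. (real i + 1 + K) / (real i + K)\<^sup>2) \<le> 2 * ln (real k + K)"
proof -
  have claim: "(\<Sum>i<k. (real i + 1 + K) / (real i + K)\<^sup>2) \<le> 2 * (ln (real k + K - 1) - ln (K - 1))" for k
  proof (induction k)
    case 0 then show ?case by simp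
  next
    case (Suc k)
    define t where "t = real k + K"
    have t: "t \<ge> 2" unfolding t_def using K by simp
    have a: "(t + 1) / t\<^sup>2 \<le> 2 / t" using t by (simp add: field_simps power2_eq_square)
    have "ln ((t - 1) / t) \<le> (t - 1) / t - 1" using t by (intro ln_le_minus_one) simp
    moreover have "ln ((t - 1) / t) = ln (t - 1) - ln t" using t by (simp add: ln_div)
    moreover have "(t - 1) / t - 1 = - (1 / t)" using t by (simp add: field_simps)
    ultimately have b: "1 / t \<le> ln t - ln (t - 1)" by simp
    have "(\<Sum>i<Suc k. (real i + 1 + K) / (real i + K)\<^sup>2) = (\<Sum>i<k. (real i + 1 + K) / (real i + K)\<^sup>2) + (t + 1) / t\<^sup>2"
      unfolding t_def by (simp add: add_ac)
    also have "\<dots> \<le> 2 * (ln (t - 1) - ln (K - 1)) + 2 * (ln t - ln (t - 1))"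
    proof -
      have "2 / t \<le> 2 * (ln t - ln (t - 1))" using b by simp
      then show ?thesis using Suc.IH a unfolding t_def by linarith
    qed
    also have "\<dots> = 2 * (ln (real (Suc k) + K - 1) - ln (K - 1))" unfolding t_def by simp
    finally show ?case .
  qed
  have "ln (K - 1) \<ge> 0" using K by simp
  moreover have "ln (real k + K - 1) \<le> ln (real k + K)" using K by simp
  ultimately show ?thesis using claim[of k] by (smt (verit))
qed

lemma harmonic_weight_sum_gt_one:
  fixes K c :: real
  assumes K: "K \<ge> 1" and c: "1 < c" "c \<le> K"
  shows "(\<Sum>i<k. (real i + 1 + K) powr c / (real i + K)\<^sup>2) \<le> 2 * exp 1 * ((real k + K) powr (c - 1) - K powr (c - 1)) / (c - 1)"
proof (induction k)
  case 0 then show ?case by simp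
next
  case (Suc k)
  define t where "t = real k + K"
  have t: "t \<ge> 1" "t \<ge> c" unfolding t_def using K c by auto
  have r1: "((t + 1) / t) powr c \<le> exp 1"
  proof -
    have "((t + 1) / t) = 1 + 1 / t" using t by (simp add: field_simps)
    moreover have "ln (1 + 1 / t) \<le> 1 / t" using t by (intro ln_add_one_self_le_self) simp
    then have "c * ln (1 + 1 / t) \<le> c * (1 / t)" using c by (intro mult_left_mono) auto
    moreover have "c * (1 / t) \<le> 1" using t by (simp add: field_simps)
    ultimately have "c * ln ((t + 1) / t) \<le> 1" by simp
    moreover have "((t + 1) / t) powr c = exp (c * ln ((t + 1) / t))" using t by (simp add: powr_def mult.commute)
    ultimately show ?thesis by simp
  qed
  have r2: "(t + 1) powr c / t\<^sup>2 = ((t + 1) / t) powr c * t powr (c - 2)"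
    using t by (simp add: powr_divide powr_diff powr_numeral field_simps)
  have tinc: "(c - 1) / 2 * t powr (c - 1 - 1) \<le> (t + 1) powr (c - 1) - t powr (c - 1)"
    by (rule powr_diff_ge) (use t c in auto)
  have "(t + 1) powr c / t\<^sup>2 \<le> exp 1 * t powr (c - 2)"
    unfolding r2 using r1 by (intro mult_right_mono) auto
  also have "\<dots> \<le> exp 1 * (2 * ((t + 1) powr (c - 1) - t powr (c - 1)) / (c - 1))"
    using tinc c by (intro mult_left_mono) (auto simp: field_simps)
  finally have tm: "(t + 1) powr c / t\<^sup>2 \<le> 2 * exp 1 * ((t + 1) powr (c - 1) - t powr (c - 1)) / (c - 1)" by (simp add: algebra_simps)
  have "(\<Sum>i<Suc k. (real i + 1 + K) powr c / (real i + K)\<^sup>2) = (\<Sum>i<k. (real i + 1 + K) powr c / (real i + K)\<^sup>2) + (t + 1) powr c / t\<^sup>2"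
    unfolding t_def by (simp add: add_ac)
  also have "\<dots> \<le> 2 * exp 1 * (t powr (c - 1) - K powr (c - 1)) / (c - 1) + 2 * exp 1 * ((t + 1) powr (c - 1) - t powr (c - 1)) / (c - 1)"
    using Suc.IH tm unfolding t_def by linarith
  also have "\<dots> = 2 * exp 1 * ((real (Suc k) + K) powr (c - 1) - K powr (c - 1)) / (c - 1)"
    unfolding t_def by (simp add: add_divide_distrib[symmetric] algebra_simps)
  finally show ?case .
qed

lemma add_one_powr_diff_le:
  fixes t \<xi> :: real
  assumes t: "t > 0" and \<xi>: "0 < \<xi>" "\<xi> < 1"
  shows "(t + 1) powr (1 - \<xi>) - t powr (1 - \<xi>) \<le> (1 - \<xi>) / t powr \<xi>"
proof -
  have e1: "(t + 1) powr (1 - \<xi>) = t powr (1 - \<xi>) * (1 + 1 / t) powr (1 - \<xi>)"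
  proof -
    have "t + 1 = t * (1 + 1 / t)" using t by (simp add: field_simps)
    moreover have "(t * (1 + 1 / t)) powr (1 - \<xi>) = t powr (1 - \<xi>) * (1 + 1 / t) powr (1 - \<xi>)"
      using t powr_mult[of t "1 + 1/t" "1 - \<xi>"] by simp
    ultimately show ?thesis by simp
  qed
  have "(1 + 1 / t) powr (1 - \<xi>) \<le> 1 + (1 - \<xi>) * (1 / t)" by (rule powr_le_one_add_mult) (use t \<xi> in auto)
  then have "(t + 1) powr (1 - \<xi>) \<le> t powr (1 - \<xi>) * (1 + (1 - \<xi>) * (1 / t))"
    unfolding e1 by (intro mult_left_mono) auto
  moreover have "t powr (1 - \<xi>) * ((1 - \<xi>) * (1 / t)) = (1 - \<xi>) / t powr \<xi>"
    using t by (simp add: powr_diff field_simps)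
  ultimately show ?thesis by (simp add: distrib_left)
qed

lemma prod_one_minus_poly_le_exp:
  fixes K \<xi> c :: real
  assumes K: "K > 0" and \<xi>: "0 < \<xi>" "\<xi> < 1" and c: "c \<ge> 0"
    and nn: "\<And>j. 0 \<le> 1 - c / (real j + K) powr \<xi>"
  shows "(\<Prod>j<k. 1 - c / (real j + K) powr \<xi>) \<le> exp (- (c / (1 - \<xi>)) * ((real k + K) powr (1 - \<xi>) - K powr (1 - \<xi>)))"
proof (induction k)
  case 0 then show ?case by simp
next
  case (Suc k)
  define t where "t = real k + K"
  have t: "t > 0" unfolding t_def using K by simp
  have P0: "0 \<le> (\<Prod>j<k. 1 - c / (real j + K) powr \<xi>)" using nn by (intro prod_nonneg) auto
  have "(\<Prod>j<Suc k. 1 - c / (real j + K) powr \<xi>) = (\<Prod>j<k. 1 - c / (real j + K) powr \<xi>) * (1 - c / t powr \<xi>)"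
    unfolding t_def by simp
  also have "\<dots> \<le> exp (- (c / (1 - \<xi>)) * (t powr (1 - \<xi>) - K powr (1 - \<xi>))) * exp (- (c / t powr \<xi>))"
  proof (rule mult_mono)
    show "(\<Prod>j<k. 1 - c / (real j + K) powr \<xi>) \<le> exp (- (c / (1 - \<xi>)) * (t powr (1 - \<xi>) - K powr (1 - \<xi>)))"
      using Suc.IH unfolding t_def .
    show "1 - c / t powr \<xi> \<le> exp (- (c / t powr \<xi>))" using exp_ge_add_one_self[of "- (c / t powr \<xi>)"] by simp
  qed (use P0 nn[of k] in \<open>auto simp: t_def\<close>)
  also have "\<dots> = exp (- (c / (1 - \<xi>)) * (t powr (1 - \<xi>) - K powr (1 - \<xi>)) - c / t powr \<xi>)"
    by (simp add: exp_add[symmetric])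
  also have "\<dots> \<le> exp (- (c / (1 - \<xi>)) * ((t + 1) powr (1 - \<xi>) - K powr (1 - \<xi>)))"
  proof -
    have s: "(t + 1) powr (1 - \<xi>) - t powr (1 - \<xi>) \<le> (1 - \<xi>) / t powr \<xi>" by (rule add_one_powr_diff_le[OF t \<xi>])
    have cq: "c / (1 - \<xi>) \<ge> 0" using c \<xi> by simp
    have "(c / (1 - \<xi>)) * ((t + 1) powr (1 - \<xi>) - t powr (1 - \<xi>)) \<le> (c / (1 - \<xi>)) * ((1 - \<xi>) / t powr \<xi>)"
      using s cq by (rule mult_left_mono)
    also have "\<dots> = c / t powr \<xi>" using \<xi> by simp
    finally have "(c / (1 - \<xi>)) * ((t + 1) powr (1 - \<xi>) - t powr (1 - \<xi>)) \<le> c / t powr \<xi>" .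
    then show ?thesis by (simp add: algebra_simps)
  qed
  also have "t + 1 = real (Suc k) + K" unfolding t_def by simp
  finally show ?case .
qed

lemma poly_step_decrement_le:
  fixes K \<xi> \<epsilon> a :: real
  assumes a: "0 < a" and \<epsilon>: "0 < \<epsilon>" and K: "0 < K" and \<xi>: "0 < \<xi>" "\<xi> < 1"
    and Kb: "2 * \<xi> / (a * \<epsilon>) \<le> K powr (1 - \<xi>)"
  shows "\<epsilon> / (real k + K) powr \<xi> - \<epsilon> / (real (Suc k) + K) powr \<xi> \<le> a / 2 * (\<epsilon> / (real k + K) powr \<xi>)\<^sup>2"
proof -
  define t where "t = real k + K"
  have t: "t > 0" unfolding t_def using K by simp
  let ?e = "\<epsilon> / t powr \<xi>"
  have "?e * (1 - \<xi> / t) \<le> ?e * (t / (t + 1)) powr \<xi>"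
    using one_minus_div_le_powr[of t \<xi>] t \<xi> \<epsilon> by (intro mult_left_mono) auto
  also have "\<dots> = \<epsilon> / (t + 1) powr \<xi>" using t by (simp add: powr_divide)
  finally have "?e - ?e * (\<xi> / t) \<le> \<epsilon> / (t + 1) powr \<xi>" by (simp only: right_diff_distrib mult_1_right)
  then have decrease: "?e - \<epsilon> / (t + 1) powr \<xi> \<le> ?e * (\<xi> / t)" by linarith
  have "2 * \<xi> \<le> a * \<epsilon> * t powr (1 - \<xi>)"
    using Kb powr_mono2[of "1 - \<xi>" K t] a \<epsilon> K \<xi> unfolding t_def
    by (simp add: field_simps) (smt (verit) mult_left_mono mult_pos_pos)
  then have "2 * \<xi> * t powr \<xi> \<le> a * \<epsilon> * (t powr (1 - \<xi>) * t powr \<xi>)"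
    using t by (simp add: mult_right_mono mult.assoc)
  then have "\<xi> / t \<le> a / 2 * ?e" using t by (simp add: powr_add[symmetric] field_simps)
  then have "?e * (\<xi> / t) \<le> ?e * (a / 2 * ?e)" using t \<epsilon> by (intro mult_left_mono) auto
  with decrease show ?thesis unfolding t_def by (simp add: power2_eq_square algebra_simps)
qed

text \<open>The step sizes decrease slowly enough (this is what the constraint on \<open>K\<close> buys) that
  \<open>2 e\<^sub>k / a\<close> is a supersolution of the recursion defining \<open>damped_sq_sum\<close>.\<close>
lemma damped_sq_sum_poly_le:
  fixes K \<xi> \<epsilon> a :: real and e :: "nat \<Rightarrow> real"
  assumes e_def: "\<And>k. e k = \<epsilon> / (real k + K) powr \<xi>" and a: "a > 0" and \<epsilon>: "\<epsilon> > 0" and K: "K > 0"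
    and \<xi>: "0 < \<xi>" "\<xi> < 1" and Kb: "2 * \<xi> / (a * \<epsilon>) \<le> K powr (1 - \<xi>)"
    and nonneg: "\<And>k. 0 \<le> 1 - a * e k"
  shows "damped_sq_sum a e k \<le> 2 / a * e k"
proof (induction k)
  case (Suc k)
  have "damped_sq_sum a e (Suc k) \<le> (1 - a * e k) * (2 / a * e k) + (e k)\<^sup>2"
    using mult_left_mono[OF Suc.IH nonneg[of k]] by (simp add: damped_sq_sum_Suc)
  also have "\<dots> = 2 / a * e k - (e k)\<^sup>2" using a by (simp add: field_simps power2_eq_square)
  also have "\<dots> \<le> 2 / a * e (Suc k)"
  proof -
    have "e k - e (Suc k) \<le> a / 2 * (e k)\<^sup>2"
      unfolding e_def by (rule poly_step_decrement_le[OF a \<epsilon> K \<xi> Kb])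
    then have "2 / a * (e k - e (Suc k)) \<le> 2 / a * (a / 2 * (e k)\<^sup>2)" using a by (intro mult_left_mono) auto
    then show ?thesis using a by (simp add: right_diff_distrib)
  qed
  finally show ?case .
qed (use e_def \<epsilon> a K in simp)

lemma prod_harmonic_steps_le:
  assumes "K > 0" "0 \<le> a * \<epsilon>" "a * \<epsilon> \<le> K"
  shows "(\<Prod>j<k. 1 - a * (\<epsilon> / (real j + K))) \<le> (K / (real k + K)) powr (a * \<epsilon>)"
  using prod_one_minus_harmonic_le[OF assms, of 0 k] by (simp add: lessThan_atLeast0)

lemma damped_sq_sum_harmonic_lt_one:
  assumes K: "1 \<le> K" and c: "0 < a * \<epsilon>" "a * \<epsilon> < 1"
  shows "damped_sq_sum a (\<lambda>j. \<epsilon> / (real j + K)) k \<le> 4 * \<epsilon>\<^sup>2 / (1 - a * \<epsilon>) / (real k + K) powr (a * \<epsilon>)"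
proof -
  have "damped_sq_sum a (\<lambda>j. \<epsilon> / (real j + K)) k
      \<le> \<epsilon>\<^sup>2 / (real k + K) powr (a * \<epsilon>) * (\<Sum>i<k. (real i + 1 + K) powr (a * \<epsilon>) / (real i + K)\<^sup>2)"
    using K c by (intro damped_sq_sum_harmonic_le) auto
  also have "\<dots> \<le> \<epsilon>\<^sup>2 / (real k + K) powr (a * \<epsilon>) * (4 / (1 - a * \<epsilon>))"
    using K c by (intro mult_left_mono harmonic_weight_sum_lt_one) auto
  also have "\<dots> = 4 * \<epsilon>\<^sup>2 / (1 - a * \<epsilon>) / (real k + K) powr (a * \<epsilon>)" by (simp add: mult_ac)
  finally show ?thesis .
qed

lemma damped_sq_sum_harmonic_one:
  assumes K: "2 \<le> K" and c: "a * \<epsilon> = 1"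
  shows "damped_sq_sum a (\<lambda>j. \<epsilon> / (real j + K)) k \<le> 2 * \<epsilon>\<^sup>2 * ln (real k + K) / (real k + K)"
proof -
  have "damped_sq_sum a (\<lambda>j. \<epsilon> / (real j + K)) k
      \<le> \<epsilon>\<^sup>2 / (real k + K) powr (a * \<epsilon>) * (\<Sum>i<k. (real i + 1 + K) powr (a * \<epsilon>) / (real i + K)\<^sup>2)"
    using K c by (intro damped_sq_sum_harmonic_le) auto
  also have "\<dots> = \<epsilon>\<^sup>2 / (real k + K) * (\<Sum>i<k. (real i + 1 + K) / (real i + K)\<^sup>2)"
    using K c by (simp add: powr_one)
  also have "\<dots> \<le> \<epsilon>\<^sup>2 / (real k + K) * (2 * ln (real k + K))"
    using K by (intro mult_left_mono harmonic_weight_sum_one) auto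
  also have "\<dots> = 2 * \<epsilon>\<^sup>2 * ln (real k + K) / (real k + K)" by simp
  finally show ?thesis .
qed

lemma damped_sq_sum_harmonic_gt_one:
  assumes K: "1 \<le> K" and c: "1 < a * \<epsilon>" "a * \<epsilon> \<le> K"
  shows "damped_sq_sum a (\<lambda>j. \<epsilon> / (real j + K)) k \<le> 2 * exp 1 * \<epsilon>\<^sup>2 / (a * \<epsilon> - 1) / (real k + K)"
proof -
  let ?c = "a * \<epsilon>"
  have "damped_sq_sum a (\<lambda>j. \<epsilon> / (real j + K)) k
      \<le> \<epsilon>\<^sup>2 / (real k + K) powr ?c * (\<Sum>i<k. (real i + 1 + K) powr ?c / (real i + K)\<^sup>2)"
    using K c by (intro damped_sq_sum_harmonic_le) auto
  also have "\<dots> \<le> \<epsilon>\<^sup>2 / (real k + K) powr ?c * (2 * exp 1 * ((real k + K) powr (?c - 1) - K powr (?c - 1)) / (?c - 1))"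
    using K c by (intro mult_left_mono harmonic_weight_sum_gt_one) auto
  also have "\<dots> \<le> \<epsilon>\<^sup>2 / (real k + K) powr ?c * (2 * exp 1 * (real k + K) powr (?c - 1) / (?c - 1))"
    using c by (intro mult_left_mono divide_right_mono) auto
  also have "\<dots> = 2 * exp 1 * \<epsilon>\<^sup>2 / (?c - 1) / (real k + K)"
    using K by (simp add: powr_diff field_simps)
  finally show ?thesis .
qed

lemma shifted_step_size_conditions:
  fixes a b \<epsilon> \<xi> K :: real
  assumes a: "0 < a" "a \<le> 1" and b: "2 \<le> b" and \<epsilon>: "0 < \<epsilon>" and \<xi>: "0 < \<xi>" "\<xi> \<le> 1"
    and K_def: "K = (if \<xi> = 1 then max 1 (\<epsilon> * b / a)
                 else max 1 (max ((\<epsilon> * b / a) powr (1 / \<xi>)) ((2 * \<xi> / (a * \<epsilon>)) powr (1 / (1 - \<xi>)))))"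
  shows "1 \<le> K"
    and "\<epsilon> / (real k + K) powr \<xi> * b \<le> a"
    and "\<xi> = 1 \<Longrightarrow> a * \<epsilon> \<le> K"
    and "\<xi> = 1 \<Longrightarrow> a * \<epsilon> = 1 \<Longrightarrow> 2 \<le> K"
    and "\<xi> < 1 \<Longrightarrow> 2 * \<xi> / (a * \<epsilon>) \<le> K powr (1 - \<xi>)"
proof -
  show K1: "1 \<le> K" unfolding K_def by auto
  have "\<epsilon> * b / a \<le> (real k + K) powr \<xi>"
  proof (cases "\<xi> = 1")
    case True
    then show ?thesis using K1 unfolding K_def by simp
  next
    case False
    then have "(\<epsilon> * b / a) powr (1 / \<xi>) \<le> K" unfolding K_def by simp
    then have "((\<epsilon> * b / a) powr (1 / \<xi>)) powr \<xi> \<le> (real k + K) powr \<xi>"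
      using \<xi> by (intro powr_mono2) auto
    then show ?thesis using \<xi> \<epsilon> a b by (simp add: powr_powr)
  qed
  then show "\<epsilon> / (real k + K) powr \<xi> * b \<le> a"
    using K1 a by (simp add: field_simps)
  have "a * a \<le> 1 * b" using a b by (intro mult_mono) auto
  then have ab: "a * \<epsilon> \<le> \<epsilon> * b / a" using a \<epsilon> by (simp add: field_simps)
  show "a * \<epsilon> \<le> K" if "\<xi> = 1" using ab that unfolding K_def by simp
  show "2 \<le> K" if "\<xi> = 1" "a * \<epsilon> = 1"
  proof -
    have "a * a \<le> 1" using a by (simp add: mult_le_one)
    then have "b \<le> b / (a * a)" using a b by (simp add: le_divide_eq mult_left_le)
    also have "\<dots> = \<epsilon> * b / a" using that(2) a by (simp add: field_simps)
    finally show ?thesis using b that(1) unfolding K_def by simp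
  qed
  show "2 * \<xi> / (a * \<epsilon>) \<le> K powr (1 - \<xi>)" if "\<xi> < 1"
  proof -
    have "(2 * \<xi> / (a * \<epsilon>)) powr (1 / (1 - \<xi>)) \<le> K" using that unfolding K_def by simp
    then have "((2 * \<xi> / (a * \<epsilon>)) powr (1 / (1 - \<xi>))) powr (1 - \<xi>) \<le> K powr (1 - \<xi>)"
      using that by (intro powr_mono2) auto
    then show ?thesis using that \<xi> \<epsilon> a by (simp add: powr_powr)
  qed
qed

section \<open>Stochastic approximation with a contractive operator\<close>

locale contractive_sa = gen_moreau_envelope nc ns \<mu> L lcs ucs
  for nc ns :: "'a::euclidean_space \<Rightarrow> real" and \<mu> L lcs ucs :: real +
  fixes M :: "'w measure" and ne :: "'a \<Rightarrow> real" and H :: "'a \<Rightarrow> 'a" and \<gamma> :: real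
    and xstar x0 :: 'a and x w :: "nat \<Rightarrow> 'w \<Rightarrow> 'a" and \<epsilon>k :: "nat \<Rightarrow> real"
    and A B les ues :: real
  assumes prob: "prob_space M"
    and ne_norm: "is_norm ne"
    and contraction: "\<And>u v. nc (H u - H v) \<le> \<gamma> * nc (u - v)"
    and \<gamma>: "0 < \<gamma>" "\<gamma> < 1"
    and fixpoint: "H xstar = xstar"
    and x_0: "x 0 = (\<lambda>\<omega>. x0)"
    and x_Suc: "\<And>k \<omega>. x (Suc k) \<omega> = x k \<omega> + \<epsilon>k k *\<^sub>R (H (x k \<omega>) - x k \<omega> + w k \<omega>)"
    and step_nonneg: "\<And>k. 0 \<le> \<epsilon>k k"
    and w_integrable: "\<And>k. integrable M (w k)"
    and w_cond_mean: "\<And>k b. b \<in> Basis \<Longrightarrow>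
      AE \<omega> in M. real_cond_exp M (gen_filtr M x w k) (\<lambda>\<omega>. w k \<omega> \<bullet> b) \<omega> = 0"
    and w_cond_var: "\<And>k. AE \<omega> in M. nn_cond_exp M (gen_filtr M x w k) (\<lambda>\<omega>. ennreal ((ne (w k \<omega>))\<^sup>2)) \<omega>
      \<le> ennreal (A + B * (ne (x k \<omega>))\<^sup>2)"
    and AB: "0 \<le> A" "0 \<le> B"
    and lcs_le: "lcs \<le> 1" and les: "0 < les" "les \<le> 1" and ucs_ge: "1 \<le> ucs" and ues_ge: "1 \<le> ues"
    and ne_ns_equiv: "\<And>u. les * ne u \<le> ns u \<and> ns u \<le> ues * ne u"
begin

definition \<alpha>2 :: real where
  "\<alpha>2 = 1 - \<gamma> * sqrt \<alpha>1"

definition \<alpha>3 :: real where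
  "\<alpha>3 = 4 * ucs\<^sup>2 * ues\<^sup>2 * (B + 2) * L * (lcs\<^sup>2 + \<mu>) / (\<mu> * lcs\<^sup>2 * les\<^sup>2)"

definition \<alpha>4 :: real where
  "\<alpha>4 = \<alpha>3 / (2 * (B + 2))"

definition noise_level :: real where
  "noise_level = L / \<mu> * ues\<^sup>2 * (ucs / les)\<^sup>2 * (A + 2 * B * (nc xstar)\<^sup>2)"

definition mean_envelope :: "nat \<Rightarrow> real" where
  "mean_envelope k = (\<integral>\<omega>. envelope (x k \<omega> - xstar) \<partial>M)"

lemma \<alpha>3_eq: "\<alpha>3 = L / \<mu> * (1 + \<mu> / lcs\<^sup>2) * (4 * (B + 2) * ucs\<^sup>2 * (ues\<^sup>2 / les\<^sup>2))"
  unfolding \<alpha>3_def using mu_pos lcs_pos les by (simp add: field_simps)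

lemma \<alpha>4_eq: "\<alpha>4 = L / \<mu> * (1 + \<mu> / lcs\<^sup>2) * (2 * ucs\<^sup>2 * (ues\<^sup>2 / les\<^sup>2))"
proof -
  have "P * (4 * (B + 2) * ucs\<^sup>2 * Q) / (2 * (B + 2)) = P * (2 * ucs\<^sup>2 * Q)" for P Q
    using AB by (simp add: field_simps)
  then show ?thesis unfolding \<alpha>4_def \<alpha>3_eq .
qed

lemma \<alpha>4_noise: "\<alpha>4 * (A + 2 * B * (nc xstar)\<^sup>2) = 2 * (1 + \<mu> / lcs\<^sup>2) * noise_level"
  unfolding \<alpha>4_eq noise_level_def using mu_pos lcs_pos les by (simp add: power_divide field_simps)

lemma \<alpha>2_le_one: "\<alpha>2 \<le> 1"
  unfolding \<alpha>2_def using \<gamma> \<alpha>1_pos by simp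

lemma \<alpha>3_ge_two: "\<alpha>3 \<ge> 2"
proof -
  have "L / \<mu> * (1 + \<mu> / lcs\<^sup>2) = L / \<mu> + L / lcs\<^sup>2" using mu_pos lcs_pos by (simp add: field_simps)
  moreover have "L / lcs\<^sup>2 \<ge> L" using smoothness_const_ge_one lcs_pos lcs_le
    by (simp add: field_simps power_le_one mult_left_le)
  ultimately have f1: "L / \<mu> * (1 + \<mu> / lcs\<^sup>2) \<ge> 1"
    using smoothness_const_ge_one mu_pos by (smt (verit) divide_nonneg_pos)
  have f2: "4 * (B + 2) * ucs\<^sup>2 * (ues\<^sup>2 / les\<^sup>2) \<ge> 2 * 1"
  proof -
    have "les\<^sup>2 \<le> 1 * 1" using les by (simp add: power_le_one)
    also have "1 * 1 \<le> ucs\<^sup>2 * ues\<^sup>2" using ucs_ge ues_ge by (intro mult_mono) (auto simp: one_le_power)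
    finally have "ucs\<^sup>2 * (ues\<^sup>2 / les\<^sup>2) \<ge> 1" using les by (simp add: field_simps)
    then have "2 * 1 \<le> (4 * (B + 2)) * (ucs\<^sup>2 * (ues\<^sup>2 / les\<^sup>2))" using AB by (intro mult_mono) auto
    then show ?thesis by (simp only: mult.assoc)
  qed
  have "1 * (2 * 1) \<le> L / \<mu> * (1 + \<mu> / lcs\<^sup>2) * (4 * (B + 2) * ucs\<^sup>2 * (ues\<^sup>2 / les\<^sup>2))"
    using f1 by (intro mult_mono[OF f1 f2]) auto
  then show ?thesis unfolding \<alpha>3_eq by simp
qed

lemma step_coefficient_le:
  "L / \<mu> * (1 + \<mu> / lcs\<^sup>2) * (8 * ucs\<^sup>2 + 4 * B * ucs\<^sup>2 * (ues\<^sup>2 / les\<^sup>2)) \<le> \<alpha>3"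
proof -
  have "1 \<le> ues\<^sup>2 / les\<^sup>2"
    using ues_ge les by (simp add: field_simps one_le_power power_le_one order_trans[OF power_le_one])
  then have "8 * ucs\<^sup>2 + 4 * B * ucs\<^sup>2 * (ues\<^sup>2 / les\<^sup>2) \<le> 4 * (B + 2) * ucs\<^sup>2 * (ues\<^sup>2 / les\<^sup>2)"
    using mult_left_mono[of 1 "ues\<^sup>2 / les\<^sup>2" "8 * ucs\<^sup>2"] by (simp add: algebra_simps)
  moreover have "0 \<le> L / \<mu> * (1 + \<mu> / lcs\<^sup>2)"
    using smoothness_const_ge_one mu_pos lcs_pos by (simp add: add_pos_pos)
  ultimately show ?thesis unfolding \<alpha>3_eq by (rule mult_left_mono)
qed

lemma noise_coefficient_le: "L / \<mu> * ues\<^sup>2 * (A + 2 * B * (ucs / les)\<^sup>2 * (nc xstar)\<^sup>2) \<le> noise_level"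
proof -
  have "1 \<le> (ucs / les)\<^sup>2"
    using ucs_ge les by (simp add: power_divide one_le_power power_le_one order_trans[OF power_le_one] field_simps)
  then have "A + 2 * B * (ucs / les)\<^sup>2 * (nc xstar)\<^sup>2 \<le> (ucs / les)\<^sup>2 * (A + 2 * B * (nc xstar)\<^sup>2)"
    using mult_right_mono[of 1 "(ucs / les)\<^sup>2" A] AB by (simp add: algebra_simps)
  then have "L / \<mu> * ues\<^sup>2 * (A + 2 * B * (ucs / les)\<^sup>2 * (nc xstar)\<^sup>2)
      \<le> L / \<mu> * ues\<^sup>2 * ((ucs / les)\<^sup>2 * (A + 2 * B * (nc xstar)\<^sup>2))"
    using smoothness_const_ge_one mu_pos by (intro mult_left_mono) auto
  then show ?thesis unfolding noise_level_def by (simp only: mult.assoc)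
qed
lemma borel_measurable_H[measurable]: "H \<in> borel_measurable borel"
proof -
  obtain c where c: "c > 0" "\<And>v. c * norm v \<le> nc v" using is_norm_ge_norm[OF nc_norm] by blast
  obtain C where C: "C > 0" "\<And>v. nc v \<le> C * norm v" using is_norm_le_norm[OF nc_norm] by blast
  have "(\<gamma> * C / c)-lipschitz_on UNIV H"
  proof (rule lipschitz_onI)
    fix u v :: 'a
    have "c * dist (H u) (H v) \<le> nc (H u - H v)" using c(2) by (simp add: dist_norm)
    also have "\<dots> \<le> \<gamma> * nc (u - v)" by (rule contraction)
    also have "\<dots> \<le> \<gamma> * (C * dist u v)" using C(2)[of "u - v"] \<gamma> by (simp add: dist_norm)
    finally have "c * dist (H u) (H v) \<le> \<gamma> * (C * dist u v)" .
    then show "dist (H u) (H v) \<le> \<gamma> * C / c * dist u v" using c by (simp add: field_simps)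
  qed (use \<gamma> C c in simp)
  then show ?thesis by (intro borel_measurable_continuous_onI lipschitz_on_continuous_on)
qed

lemma w_measurable[measurable]: "w k \<in> borel_measurable M"
  using w_integrable by (rule borel_measurable_integrable)

lemma x_measurable[measurable]: "x k \<in> borel_measurable M"
proof (induction k)
  case (Suc k)
  note [measurable] = Suc.IH
  show ?case unfolding x_Suc[abs_def] by measurable
qed (simp add: x_0)

lemma finite_measure_subalgebra_gen_filtr: "finite_measure_subalgebra M (gen_filtr M x w k)"
proof -
  interpret prob_space M by (rule prob)
  show ?thesis by unfold_locales (rule subalgebra_gen_filtr[OF x_measurable w_measurable])
qed

lemma envelope_err_Suc_le:
  "envelope (x (Suc k) \<omega> - xstar)
    \<le> (1 - 2 * \<alpha>2 * \<epsilon>k k + (\<epsilon>k k)\<^sup>2 * (L / \<mu>) * (8 * ucs\<^sup>2 * (1 + \<mu> / lcs\<^sup>2))) * envelope (x k \<omega> - xstar)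
      + \<epsilon>k k * (envelope_grad (x k \<omega> - xstar) \<bullet> w k \<omega>) + (L / \<mu>) * (\<epsilon>k k)\<^sup>2 * (ns (w k \<omega>))\<^sup>2"
proof -
  let ?z = "x k \<omega> - xstar" and ?y = "H (x k \<omega>) - xstar"
  have step: "x (Suc k) \<omega> - xstar = ?z + \<epsilon>k k *\<^sub>R ((?y - ?z) + w k \<omega>)"
    by (simp add: x_Suc algebra_simps)
  have "nc ?y \<le> \<gamma> * nc ?z"
    using contraction[of "x k \<omega>" xstar] fixpoint by simp
  from envelope_sa_step[OF this \<gamma>(1) less_imp_le[OF \<gamma>(2)] step_nonneg]
  show ?thesis unfolding step \<alpha>2_def .
qed

lemma ne_sq_le: "(ne u)\<^sup>2 \<le> 2 * (ucs / les)\<^sup>2 * ((nc (u - xstar))\<^sup>2 + (nc xstar)\<^sup>2)"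
proof -
  have "les * ne u \<le> ucs * nc u" using ne_ns_equiv[of u] nc_ns_equiv[of u] by linarith
  also have "\<dots> \<le> ucs * (nc (u - xstar) + nc xstar)"
    using is_normD(4)[OF nc_norm, of "u - xstar" xstar] ucs_ge by (intro mult_left_mono) auto
  finally have "ne u \<le> ucs / les * (nc (u - xstar) + nc xstar)" using les by (simp add: field_simps)
  then have "(ne u)\<^sup>2 \<le> (ucs / les * (nc (u - xstar) + nc xstar))\<^sup>2"
    using is_normD(1)[OF ne_norm, of u] by (intro power_mono)
  also have "\<dots> = (ucs / les)\<^sup>2 * (nc (u - xstar) + nc xstar)\<^sup>2" by (rule power_mult_distrib)
  also have "\<dots> \<le> (ucs / les)\<^sup>2 * (2 * ((nc (u - xstar))\<^sup>2 + (nc xstar)\<^sup>2))"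
    using sum_squares_bound[of "nc (u - xstar)" "nc xstar"] by (intro mult_left_mono) (simp_all add: power2_sum)
  finally show ?thesis by (simp only: mult.assoc)
qed

lemma noise_moment:
  assumes int: "integrable M (\<lambda>\<omega>. envelope (x k \<omega> - xstar))"
  shows "integrable M (\<lambda>\<omega>. (ne (w k \<omega>))\<^sup>2)"
    and "(\<integral>\<omega>. (ne (w k \<omega>))\<^sup>2 \<partial>M)
      \<le> A + B * (2 * (ucs / les)\<^sup>2 * (2 * (1 + \<mu> / lcs\<^sup>2) * mean_envelope k + (nc xstar)\<^sup>2))"
proof -
  interpret prob_space M by (rule prob)
  interpret F: finite_measure_subalgebra M "gen_filtr M x w k" by (rule finite_measure_subalgebra_gen_filtr)
  have [measurable]: "nc \<in> borel_measurable borel" "ne \<in> borel_measurable borel"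
    using borel_measurable_is_norm nc_norm ne_norm by auto
  have inc: "integrable M (\<lambda>\<omega>. (nc (x k \<omega> - xstar))\<^sup>2)"
    by (rule integrable_nc_sq_of_envelope[OF int]) measurable
  have inex: "integrable M (\<lambda>\<omega>. (ne (x k \<omega>))\<^sup>2)"
  proof (rule Bochner_Integration.integrable_bound)
    show "integrable M (\<lambda>\<omega>. 2 * (ucs / les)\<^sup>2 * ((nc (x k \<omega> - xstar))\<^sup>2 + (nc xstar)\<^sup>2))"
      using inc by (intro integrable_mult_right Bochner_Integration.integrable_add) auto
    show "AE \<omega> in M. norm ((ne (x k \<omega>))\<^sup>2) \<le> norm (2 * (ucs / les)\<^sup>2 * ((nc (x k \<omega> - xstar))\<^sup>2 + (nc xstar)\<^sup>2))"
      using ne_sq_le by (intro AE_I2) (simp add: abs_of_nonneg)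
  qed measurable
  have "integrable M (\<lambda>\<omega>. (ne (w k \<omega>))\<^sup>2) \<and>
      (\<integral>\<omega>. (ne (w k \<omega>))\<^sup>2 \<partial>M) \<le> (\<integral>\<omega>. A + B * (ne (x k \<omega>))\<^sup>2 \<partial>M)"
    using F.integral_le_of_nn_cond_exp_le[of "\<lambda>\<omega>. (ne (w k \<omega>))\<^sup>2" "\<lambda>\<omega>. A + B * (ne (x k \<omega>))\<^sup>2"]
      inex w_cond_var[of k] AB by auto
  then show "integrable M (\<lambda>\<omega>. (ne (w k \<omega>))\<^sup>2)" by blast
  have "(\<integral>\<omega>. (ne (x k \<omega>))\<^sup>2 \<partial>M) \<le> (\<integral>\<omega>. 2 * (ucs / les)\<^sup>2 * ((nc (x k \<omega> - xstar))\<^sup>2 + (nc xstar)\<^sup>2) \<partial>M)"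
    using inex inc ne_sq_le by (intro integral_mono) (auto intro!: integrable_mult_right)
  also have "\<dots> = 2 * (ucs / les)\<^sup>2 * ((\<integral>\<omega>. (nc (x k \<omega> - xstar))\<^sup>2 \<partial>M) + (nc xstar)\<^sup>2)"
    using inc by (simp add: prob_space)
  also have "(\<integral>\<omega>. (nc (x k \<omega> - xstar))\<^sup>2 \<partial>M) \<le> (\<integral>\<omega>. 2 * (1 + \<mu> / lcs\<^sup>2) * envelope (x k \<omega> - xstar) \<partial>M)"
    using inc int nc_sq_le_envelope by (intro integral_mono) auto
  also have "\<dots> = 2 * (1 + \<mu> / lcs\<^sup>2) * mean_envelope k" unfolding mean_envelope_def by simp
  finally have "B * (\<integral>\<omega>. (ne (x k \<omega>))\<^sup>2 \<partial>M)
      \<le> B * (2 * (ucs / les)\<^sup>2 * (2 * (1 + \<mu> / lcs\<^sup>2) * mean_envelope k + (nc xstar)\<^sup>2))"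
    using AB(2) by (simp add: mult_left_mono)
  moreover have "(\<integral>\<omega>. A + B * (ne (x k \<omega>))\<^sup>2 \<partial>M) = A + B * (\<integral>\<omega>. (ne (x k \<omega>))\<^sup>2 \<partial>M)"
    using inex by (simp add: prob_space)
  ultimately show "(\<integral>\<omega>. (ne (w k \<omega>))\<^sup>2 \<partial>M)
      \<le> A + B * (2 * (ucs / les)\<^sup>2 * (2 * (1 + \<mu> / lcs\<^sup>2) * mean_envelope k + (nc xstar)\<^sup>2))"
    using \<open>integrable M _ \<and> _\<close> by linarith
qed

lemma integrable_noise_component_sq:
  assumes int: "integrable M (\<lambda>\<omega>. (ne (w k \<omega>))\<^sup>2)" and b: "b \<in> Basis"
  shows "integrable M (\<lambda>\<omega>. (w k \<omega> \<bullet> b)\<^sup>2)"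
proof -
  obtain c where c: "c > 0" "\<And>v. c * norm v \<le> ne v" using is_norm_ge_norm[OF ne_norm] by blast
  have "(w k \<omega> \<bullet> b)\<^sup>2 \<le> 1 / c\<^sup>2 * (ne (w k \<omega>))\<^sup>2" for \<omega>
  proof -
    have "\<bar>w k \<omega> \<bullet> b\<bar> \<le> norm (w k \<omega>)" using b by (rule Basis_le_norm)
    also have "\<dots> \<le> ne (w k \<omega>) / c" using c by (simp add: field_simps mult.commute)
    finally have "(w k \<omega> \<bullet> b)\<^sup>2 \<le> (ne (w k \<omega>) / c)\<^sup>2" by (metis abs_ge_zero power2_abs power_mono)
    then show ?thesis by (simp add: power_divide)
  qed
  then have "AE \<omega> in M. norm ((w k \<omega> \<bullet> b)\<^sup>2) \<le> norm (1 / c\<^sup>2 * (ne (w k \<omega>))\<^sup>2)"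
    by (intro AE_I2) simp
  then show ?thesis
    by (rule Bochner_Integration.integrable_bound[OF integrable_mult_right[OF int], rotated]) measurable
qed

lemma cross_term:
  assumes int: "integrable M (\<lambda>\<omega>. envelope (x k \<omega> - xstar))"
  shows "integrable M (\<lambda>\<omega>. envelope_grad (x k \<omega> - xstar) \<bullet> w k \<omega>)"
    and "(\<integral>\<omega>. envelope_grad (x k \<omega> - xstar) \<bullet> w k \<omega> \<partial>M) = 0"
proof -
  interpret prob_space M by (rule prob)
  interpret F: finite_measure_subalgebra M "gen_filtr M x w k" by (rule finite_measure_subalgebra_gen_filtr)
  define z where "z \<omega> = x k \<omega> - xstar" for \<omega>
  have zF: "z \<in> borel_measurable (gen_filtr M x w k)"
    using measurable_gen_filtr[OF x_measurable w_measurable] unfolding z_def by measurable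
  have [measurable]: "z \<in> borel_measurable M" unfolding z_def by measurable
  have component: "integrable M (\<lambda>\<omega>. (envelope_grad (z \<omega>) \<bullet> b) * (w k \<omega> \<bullet> b)) \<and>
      (\<integral>\<omega>. (envelope_grad (z \<omega>) \<bullet> b) * (w k \<omega> \<bullet> b) \<partial>M) = 0" if b: "b \<in> Basis" for b
  proof
    have gradF: "(\<lambda>\<omega>. envelope_grad (z \<omega>) \<bullet> b) \<in> borel_measurable (gen_filtr M x w k)"
      using measurable_compose[OF zF borel_measurable_envelope_grad_inner] by (simp add: o_def)
    have [measurable]: "(\<lambda>\<omega>. envelope_grad (z \<omega>) \<bullet> b) \<in> borel_measurable M"
      by (rule measurable_from_subalg[OF F.subalg gradF])
    have "integrable M (\<lambda>\<omega>. (w k \<omega> \<bullet> b)\<^sup>2)"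
      by (rule integrable_noise_component_sq[OF noise_moment(1)[OF int] b])
    moreover have "integrable M (\<lambda>\<omega>. envelope (z \<omega>))" using int unfolding z_def .
    ultimately have dom: "integrable M (\<lambda>\<omega>. envelope b * (w k \<omega> \<bullet> b)\<^sup>2 + envelope (z \<omega>))" by simp
    have "\<bar>(envelope_grad (z \<omega>) \<bullet> b) * (w k \<omega> \<bullet> b)\<bar> \<le> envelope b * (w k \<omega> \<bullet> b)\<^sup>2 + envelope (z \<omega>)" for \<omega>
      using abs_envelope_grad_inner_le[of "z \<omega>" "(w k \<omega> \<bullet> b) *\<^sub>R b"]
      by (simp add: envelope_scaleR abs_mult mult.commute)
    moreover have "0 \<le> envelope b * (w k \<omega> \<bullet> b)\<^sup>2 + envelope (z \<omega>)" for \<omega>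
      by (simp add: envelope_nonneg)
    ultimately have "AE \<omega> in M. norm ((envelope_grad (z \<omega>) \<bullet> b) * (w k \<omega> \<bullet> b))
        \<le> norm (envelope b * (w k \<omega> \<bullet> b)\<^sup>2 + envelope (z \<omega>))"
      by (intro AE_I2) simp
    then show int_b: "integrable M (\<lambda>\<omega>. (envelope_grad (z \<omega>) \<bullet> b) * (w k \<omega> \<bullet> b))"
      by (rule Bochner_Integration.integrable_bound[OF dom, rotated]) measurable
    show "(\<integral>\<omega>. (envelope_grad (z \<omega>) \<bullet> b) * (w k \<omega> \<bullet> b) \<partial>M) = 0"
      by (rule F.integral_mult_eq_zero_of_real_cond_exp[OF int_b gradF _ w_cond_mean[OF b]]) measurable
  qed
  have inner: "envelope_grad (z \<omega>) \<bullet> w k \<omega> = (\<Sum>b\<in>Basis. (envelope_grad (z \<omega>) \<bullet> b) * (w k \<omega> \<bullet> b))" for \<omega>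
    by (rule euclidean_inner)
  show "integrable M (\<lambda>\<omega>. envelope_grad (x k \<omega> - xstar) \<bullet> w k \<omega>)"
    using component unfolding z_def[symmetric] inner by (intro Bochner_Integration.integrable_sum) blast
  show "(\<integral>\<omega>. envelope_grad (x k \<omega> - xstar) \<bullet> w k \<omega> \<partial>M) = 0"
    using component unfolding z_def[symmetric] inner by (simp add: Bochner_Integration.integral_sum)
qed

lemma noise_ns_moment:
  assumes int: "integrable M (\<lambda>\<omega>. envelope (x k \<omega> - xstar))"
  shows "integrable M (\<lambda>\<omega>. (ns (w k \<omega>))\<^sup>2)"
    and "(\<integral>\<omega>. (ns (w k \<omega>))\<^sup>2 \<partial>M)
      \<le> ues\<^sup>2 * (A + B * (2 * (ucs / les)\<^sup>2 * (2 * (1 + \<mu> / lcs\<^sup>2) * mean_envelope k + (nc xstar)\<^sup>2)))"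
proof -
  have [measurable]: "ns \<in> borel_measurable borel" by (rule borel_measurable_is_norm[OF ns_norm])
  have ns_w: "(ns (w k \<omega>))\<^sup>2 \<le> ues\<^sup>2 * (ne (w k \<omega>))\<^sup>2" for \<omega>
    using ne_ns_equiv[of "w k \<omega>"] is_normD(1)[OF ns_norm, of "w k \<omega>"]
    by (simp add: power_mono flip: power_mult_distrib)
  have "integrable M (\<lambda>\<omega>. ues\<^sup>2 * (ne (w k \<omega>))\<^sup>2)" using noise_moment(1)[OF int] by simp
  then show int_ns: "integrable M (\<lambda>\<omega>. (ns (w k \<omega>))\<^sup>2)"
    by (rule Bochner_Integration.integrable_bound) (use ns_w in \<open>auto intro!: AE_I2\<close>)
  have "(\<integral>\<omega>. (ns (w k \<omega>))\<^sup>2 \<partial>M) \<le> (\<integral>\<omega>. ues\<^sup>2 * (ne (w k \<omega>))\<^sup>2 \<partial>M)"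
    using int_ns noise_moment(1)[OF int] ns_w by (intro integral_mono) auto
  also have "\<dots> \<le> ues\<^sup>2 * (A + B * (2 * (ucs / les)\<^sup>2 * (2 * (1 + \<mu> / lcs\<^sup>2) * mean_envelope k + (nc xstar)\<^sup>2)))"
    using noise_moment(2)[OF int] by (simp add: mult_left_mono)
  finally show "(\<integral>\<omega>. (ns (w k \<omega>))\<^sup>2 \<partial>M)
      \<le> ues\<^sup>2 * (A + B * (2 * (ucs / les)\<^sup>2 * (2 * (1 + \<mu> / lcs\<^sup>2) * mean_envelope k + (nc xstar)\<^sup>2)))" .
qed

lemma expected_envelope_step:
  assumes int: "integrable M (\<lambda>\<omega>. envelope (x k \<omega> - xstar))"
  shows "integrable M (\<lambda>\<omega>. envelope (x (Suc k) \<omega> - xstar))"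
    and "mean_envelope (Suc k)
      \<le> (1 - 2 * \<alpha>2 * \<epsilon>k k + (\<epsilon>k k)\<^sup>2 * \<alpha>3) * mean_envelope k + (\<epsilon>k k)\<^sup>2 * noise_level"
proof -
  interpret prob_space M by (rule prob)
  let ?\<epsilon> = "\<epsilon>k k" and ?E = "mean_envelope k" and ?l = "1 + \<mu> / lcs\<^sup>2"
  define c where "c = 1 - 2 * \<alpha>2 * ?\<epsilon> + ?\<epsilon>\<^sup>2 * (L / \<mu>) * (8 * ucs\<^sup>2 * ?l)"
  define R where "R \<omega> = c * envelope (x k \<omega> - xstar) + ?\<epsilon> * (envelope_grad (x k \<omega> - xstar) \<bullet> w k \<omega>)
    + L / \<mu> * ?\<epsilon>\<^sup>2 * (ns (w k \<omega>))\<^sup>2" for \<omega>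
  have int_R: "integrable M R"
    unfolding R_def using int cross_term(1)[OF int] noise_ns_moment(1)[OF int] by simp
  have "(\<integral>\<omega>. R \<omega> \<partial>M) = c * ?E + L / \<mu> * ?\<epsilon>\<^sup>2 * (\<integral>\<omega>. (ns (w k \<omega>))\<^sup>2 \<partial>M)"
    unfolding R_def mean_envelope_def using int cross_term[OF int] noise_ns_moment(1)[OF int] by simp
  have le_R: "envelope (x (Suc k) \<omega> - xstar) \<le> R \<omega>" for \<omega>
    unfolding R_def c_def by (rule envelope_err_Suc_le)
  show int_Suc: "integrable M (\<lambda>\<omega>. envelope (x (Suc k) \<omega> - xstar))"
  proof (rule Bochner_Integration.integrable_bound[OF int_R])
    show "AE \<omega> in M. norm (envelope (x (Suc k) \<omega> - xstar)) \<le> norm (R \<omega>)"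
      using le_R envelope_nonneg by (intro AE_I2) (smt (verit) real_norm_def)
  qed measurable
  have "mean_envelope (Suc k) \<le> (\<integral>\<omega>. R \<omega> \<partial>M)"
    unfolding mean_envelope_def using int_Suc int_R le_R by (rule integral_mono)
  also have "\<dots> \<le> c * ?E + L / \<mu> * ?\<epsilon>\<^sup>2 * (ues\<^sup>2 * (A + B * (2 * (ucs / les)\<^sup>2 * (2 * ?l * ?E + (nc xstar)\<^sup>2))))"
    unfolding \<open>(\<integral>\<omega>. R \<omega> \<partial>M) = _\<close> using smoothness_const_ge_one mu_pos
    by (intro add_left_mono mult_left_mono[OF noise_ns_moment(2)[OF int]]) simp
  also have "\<dots> = (1 - 2 * \<alpha>2 * ?\<epsilon>) * ?E
      + ?\<epsilon>\<^sup>2 * (L / \<mu> * ?l * (8 * ucs\<^sup>2 + 4 * B * ucs\<^sup>2 * (ues\<^sup>2 / les\<^sup>2))) * ?E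
      + ?\<epsilon>\<^sup>2 * (L / \<mu> * ues\<^sup>2 * (A + 2 * B * (ucs / les)\<^sup>2 * (nc xstar)\<^sup>2))"
    unfolding c_def by (simp add: power_divide algebra_simps add_divide_distrib)
  also have "\<dots> \<le> (1 - 2 * \<alpha>2 * ?\<epsilon>) * ?E + ?\<epsilon>\<^sup>2 * \<alpha>3 * ?E + ?\<epsilon>\<^sup>2 * noise_level"
    using step_coefficient_le noise_coefficient_le
    by (intro add_mono order_refl mult_left_mono mult_right_mono) (auto simp: mean_envelope_def envelope_nonneg)
  finally show "mean_envelope (Suc k) \<le> (1 - 2 * \<alpha>2 * ?\<epsilon> + ?\<epsilon>\<^sup>2 * \<alpha>3) * ?E + ?\<epsilon>\<^sup>2 * noise_level"
    by (simp add: algebra_simps)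
qed

lemma step_factor_nonneg:
  assumes "\<epsilon>k k * \<alpha>3 \<le> \<alpha>2"
  shows "0 \<le> 1 - \<alpha>2 * \<epsilon>k k"
proof -
  have "2 * \<epsilon>k k \<le> \<epsilon>k k * \<alpha>3" using \<alpha>3_ge_two step_nonneg[of k] by (simp add: mult_left_mono mult.commute)
  then have "\<epsilon>k k \<le> 1 / 2" and "0 \<le> \<alpha>2" using assms \<alpha>2_le_one step_nonneg[of k] by linarith+
  then have "\<alpha>2 * \<epsilon>k k \<le> 1 * (1 / 2)" using \<alpha>2_le_one step_nonneg[of k] by (intro mult_mono) auto
  then show ?thesis by simp
qed

lemma mean_envelope_le:
  assumes small: "\<And>k. \<epsilon>k k * \<alpha>3 \<le> \<alpha>2"
  shows "integrable M (\<lambda>\<omega>. envelope (x k \<omega> - xstar))"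
    and "mean_envelope k \<le> (\<Prod>j<k. 1 - \<alpha>2 * \<epsilon>k j) * envelope (x0 - xstar) + noise_level * damped_sq_sum \<alpha>2 \<epsilon>k k"
proof -
  interpret prob_space M by (rule prob)
  have int: "integrable M (\<lambda>\<omega>. envelope (x k \<omega> - xstar))" for k
    by (induction k) (simp_all add: x_0 expected_envelope_step(1))
  then show "integrable M (\<lambda>\<omega>. envelope (x k \<omega> - xstar))" .
  have "mean_envelope (Suc k) \<le> (1 - \<alpha>2 * \<epsilon>k k) * mean_envelope k + (\<epsilon>k k)\<^sup>2 * noise_level" for k
  proof -
    have "(\<epsilon>k k)\<^sup>2 * \<alpha>3 \<le> \<epsilon>k k * \<alpha>2"
      using mult_left_mono[OF small step_nonneg] by (simp add: power2_eq_square mult.assoc)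
    then have "(1 - 2 * \<alpha>2 * \<epsilon>k k + (\<epsilon>k k)\<^sup>2 * \<alpha>3) * mean_envelope k \<le> (1 - \<alpha>2 * \<epsilon>k k) * mean_envelope k"
      unfolding mean_envelope_def by (intro mult_right_mono) (auto simp: envelope_nonneg)
    then show ?thesis using expected_envelope_step(2)[OF int[of k]] by linarith
  qed
  from linear_recursion_le[where E = mean_envelope, OF this step_factor_nonneg[OF small]]
  show "mean_envelope k \<le> (\<Prod>j<k. 1 - \<alpha>2 * \<epsilon>k j) * envelope (x0 - xstar) + noise_level * damped_sq_sum \<alpha>2 \<epsilon>k k"
    by (simp add: mean_envelope_def x_0 prob_space)
qed

theorem mean_square_error_le:
  assumes small: "\<And>k. \<epsilon>k k * \<alpha>3 \<le> \<alpha>2"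
  shows "(\<integral>\<^sup>+\<omega>. ennreal ((nc (x k \<omega> - xstar))\<^sup>2) \<partial>M)
    \<le> ennreal (\<alpha>1 * (nc (x0 - xstar))\<^sup>2 * (\<Prod>j<k. 1 - \<alpha>2 * \<epsilon>k j)
      + \<alpha>4 * (A + 2 * B * (nc xstar)\<^sup>2) * damped_sq_sum \<alpha>2 \<epsilon>k k)"
proof -
  let ?l = "1 + \<mu> / lcs\<^sup>2" and ?P = "\<Prod>j<k. 1 - \<alpha>2 * \<epsilon>k j"
  have l: "?l > 0" and u: "1 + \<mu> / ucs\<^sup>2 > 0" using mu_pos lcs_pos ucs_pos by (simp_all add: add_pos_pos)
  have P: "0 \<le> ?P" using step_factor_nonneg[OF small] by (simp add: prod_nonneg)
  have initial: "2 * ?l * envelope (x0 - xstar) \<le> \<alpha>1 * (nc (x0 - xstar))\<^sup>2"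
  proof -
    have "2 * ?l * envelope (x0 - xstar) \<le> 2 * ?l * ((nc (x0 - xstar))\<^sup>2 / (2 * (1 + \<mu> / ucs\<^sup>2)))"
      using envelope_le_nc_sq l by (intro mult_left_mono) auto
    also have "\<dots> = \<alpha>1 * (nc (x0 - xstar))\<^sup>2"
    proof -
      have "2 * X * (N / (2 * Y)) = X / Y * N" for X Y N :: real by simp
      then show ?thesis unfolding \<alpha>1_def .
    qed
    finally show ?thesis .
  qed
  have [measurable]: "nc \<in> borel_measurable borel" by (rule borel_measurable_is_norm[OF nc_norm])
  have int: "integrable M (\<lambda>\<omega>. (nc (x k \<omega> - xstar))\<^sup>2)"
    by (rule integrable_nc_sq_of_envelope[OF mean_envelope_le(1)[OF small]]) measurable
  have "(\<integral>\<omega>. (nc (x k \<omega> - xstar))\<^sup>2 \<partial>M) \<le> (\<integral>\<omega>. 2 * ?l * envelope (x k \<omega> - xstar) \<partial>M)"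
    using int mean_envelope_le(1)[OF small] nc_sq_le_envelope by (intro integral_mono) auto
  also have "\<dots> = 2 * ?l * mean_envelope k" unfolding mean_envelope_def by simp
  also have "\<dots> \<le> 2 * ?l * (?P * envelope (x0 - xstar) + noise_level * damped_sq_sum \<alpha>2 \<epsilon>k k)"
    using mean_envelope_le(2)[OF small] l by (intro mult_left_mono) auto
  also have "\<dots> = ?P * (2 * ?l * envelope (x0 - xstar)) + \<alpha>4 * (A + 2 * B * (nc xstar)\<^sup>2) * damped_sq_sum \<alpha>2 \<epsilon>k k"
    unfolding \<alpha>4_noise by (simp add: algebra_simps)
  also have "\<dots> \<le> ?P * (\<alpha>1 * (nc (x0 - xstar))\<^sup>2) + \<alpha>4 * (A + 2 * B * (nc xstar)\<^sup>2) * damped_sq_sum \<alpha>2 \<epsilon>k k"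
    using mult_left_mono[OF initial P] by simp
  finally have "(\<integral>\<omega>. (nc (x k \<omega> - xstar))\<^sup>2 \<partial>M)
      \<le> ?P * (\<alpha>1 * (nc (x0 - xstar))\<^sup>2) + \<alpha>4 * (A + 2 * B * (nc xstar)\<^sup>2) * damped_sq_sum \<alpha>2 \<epsilon>k k" .
  then show ?thesis
    using int by (simp add: nn_integral_eq_integral ennreal_leI mult.commute)
qed

corollary mean_square_error_bound:
  assumes "\<And>k. \<epsilon>k k * \<alpha>3 \<le> \<alpha>2"
    and "(\<Prod>j<k. 1 - \<alpha>2 * \<epsilon>k j) \<le> P" and "damped_sq_sum \<alpha>2 \<epsilon>k k \<le> S"
    and "\<alpha>1 * (nc (x0 - xstar))\<^sup>2 * P + \<alpha>4 * (A + 2 * B * (nc xstar)\<^sup>2) * S \<le> r"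
  shows "(\<integral>\<^sup>+\<omega>. ennreal ((nc (x k \<omega> - xstar))\<^sup>2) \<partial>M) \<le> ennreal r"
proof -
  have "0 \<le> \<alpha>4" unfolding \<alpha>4_def using \<alpha>3_ge_two AB by simp
  then have "\<alpha>1 * (nc (x0 - xstar))\<^sup>2 * (\<Prod>j<k. 1 - \<alpha>2 * \<epsilon>k j) + \<alpha>4 * (A + 2 * B * (nc xstar)\<^sup>2) * damped_sq_sum \<alpha>2 \<epsilon>k k
      \<le> r"
    using assms(2-4) \<alpha>1_pos AB by (smt (verit) mult_left_mono zero_le_power2 mult_nonneg_nonneg)
  then show ?thesis using mean_square_error_le[OF assms(1)] by (meson ennreal_leI order_trans)
qed

lemma mean_square_error_harmonic_lt_one:
  assumes steps: "\<And>k. \<epsilon>k k = \<epsilon> / (real k + K)" and small: "\<And>k. \<epsilon>k k * \<alpha>3 \<le> \<alpha>2"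
    and K: "1 \<le> K" and c: "0 < \<alpha>2 * \<epsilon>" "\<alpha>2 * \<epsilon> < 1"
  shows "(\<integral>\<^sup>+\<omega>. ennreal ((nc (x k \<omega> - xstar))\<^sup>2) \<partial>M)
    \<le> ennreal (\<alpha>1 * (nc (x0 - xstar))\<^sup>2 * (K / (real k + K)) powr (\<alpha>2 * \<epsilon>)
      + 4 * \<epsilon>\<^sup>2 * \<alpha>4 / (1 - \<alpha>2 * \<epsilon>) * (A + 2 * B * (nc xstar)\<^sup>2) / (real k + K) powr (\<alpha>2 * \<epsilon>))"
proof (rule mean_square_error_bound[OF small])
  have \<epsilon>k: "\<epsilon>k = (\<lambda>j. \<epsilon> / (real j + K))" using steps by auto
  show "(\<Prod>j<k. 1 - \<alpha>2 * \<epsilon>k j) \<le> (K / (real k + K)) powr (\<alpha>2 * \<epsilon>)"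
    unfolding \<epsilon>k using K c by (intro prod_harmonic_steps_le) auto
  show "damped_sq_sum \<alpha>2 \<epsilon>k k \<le> 4 * \<epsilon>\<^sup>2 / (1 - \<alpha>2 * \<epsilon>) / (real k + K) powr (\<alpha>2 * \<epsilon>)"
    unfolding \<epsilon>k using K c by (intro damped_sq_sum_harmonic_lt_one) auto
qed (simp add: mult_ac)

lemma mean_square_error_harmonic_one:
  assumes steps: "\<And>k. \<epsilon>k k = \<epsilon> / (real k + K)" and small: "\<And>k. \<epsilon>k k * \<alpha>3 \<le> \<alpha>2"
    and K: "2 \<le> K" and c: "\<alpha>2 * \<epsilon> = 1"
  shows "(\<integral>\<^sup>+\<omega>. ennreal ((nc (x k \<omega> - xstar))\<^sup>2) \<partial>M)
    \<le> ennreal (\<alpha>1 * (nc (x0 - xstar))\<^sup>2 * (K / (real k + K))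
      + 4 * \<alpha>4 / \<alpha>2\<^sup>2 * ((A + 2 * B * (nc xstar)\<^sup>2) * ln (real k + K)) / (real k + K))"
proof (rule mean_square_error_bound[OF small])
  have \<epsilon>k: "\<epsilon>k = (\<lambda>j. \<epsilon> / (real j + K))" using steps by auto
  show "(\<Prod>j<k. 1 - \<alpha>2 * \<epsilon>k j) \<le> K / (real k + K)"
    unfolding \<epsilon>k using prod_harmonic_steps_le[of K \<alpha>2 \<epsilon> k] K c by (simp add: powr_one)
  show "damped_sq_sum \<alpha>2 \<epsilon>k k \<le> 2 * \<epsilon>\<^sup>2 * ln (real k + K) / (real k + K)"
    unfolding \<epsilon>k using K c by (intro damped_sq_sum_harmonic_one) auto
  have "\<alpha>2 \<noteq> 0" using c by auto
  then have "\<epsilon> = 1 / \<alpha>2" using c by (simp add: field_simps)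
  define Y where "Y = \<alpha>4 * (A + 2 * B * (nc xstar)\<^sup>2) * (\<epsilon>\<^sup>2 * ln (real k + K) / (real k + K))"
  have "0 \<le> Y" unfolding Y_def \<alpha>4_def using \<alpha>3_ge_two AB K by simp
  moreover have "\<alpha>4 * (A + 2 * B * (nc xstar)\<^sup>2) * (2 * \<epsilon>\<^sup>2 * ln (real k + K) / (real k + K)) = 2 * Y"
    and "4 * \<alpha>4 / \<alpha>2\<^sup>2 * ((A + 2 * B * (nc xstar)\<^sup>2) * ln (real k + K)) / (real k + K) = 4 * Y"
    unfolding Y_def \<open>\<epsilon> = 1 / \<alpha>2\<close> by (simp_all add: power_divide mult_ac)
  ultimately show "\<alpha>1 * (nc (x0 - xstar))\<^sup>2 * (K / (real k + K))
      + \<alpha>4 * (A + 2 * B * (nc xstar)\<^sup>2) * (2 * \<epsilon>\<^sup>2 * ln (real k + K) / (real k + K))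
    \<le> \<alpha>1 * (nc (x0 - xstar))\<^sup>2 * (K / (real k + K))
      + 4 * \<alpha>4 / \<alpha>2\<^sup>2 * ((A + 2 * B * (nc xstar)\<^sup>2) * ln (real k + K)) / (real k + K)"
    by linarith
qed

lemma mean_square_error_harmonic_gt_one:
  assumes steps: "\<And>k. \<epsilon>k k = \<epsilon> / (real k + K)" and small: "\<And>k. \<epsilon>k k * \<alpha>3 \<le> \<alpha>2"
    and K: "1 \<le> K" "\<alpha>2 * \<epsilon> \<le> K" and c: "1 < \<alpha>2 * \<epsilon>"
  shows "(\<integral>\<^sup>+\<omega>. ennreal ((nc (x k \<omega> - xstar))\<^sup>2) \<partial>M)
    \<le> ennreal (\<alpha>1 * (nc (x0 - xstar))\<^sup>2 * (K / (real k + K)) powr (\<alpha>2 * \<epsilon>)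
      + 4 * exp 1 * \<epsilon>\<^sup>2 * \<alpha>4 / (\<alpha>2 * \<epsilon> - 1) * (A + 2 * B * (nc xstar)\<^sup>2) / (real k + K))"
proof (rule mean_square_error_bound[OF small])
  have \<epsilon>k: "\<epsilon>k = (\<lambda>j. \<epsilon> / (real j + K))" using steps by auto
  show "(\<Prod>j<k. 1 - \<alpha>2 * \<epsilon>k j) \<le> (K / (real k + K)) powr (\<alpha>2 * \<epsilon>)"
    unfolding \<epsilon>k using K c by (intro prod_harmonic_steps_le) auto
  show "damped_sq_sum \<alpha>2 \<epsilon>k k \<le> 2 * exp 1 * \<epsilon>\<^sup>2 / (\<alpha>2 * \<epsilon> - 1) / (real k + K)"
    unfolding \<epsilon>k using K c by (intro damped_sq_sum_harmonic_gt_one) auto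
  define Y where "Y = \<alpha>4 * (A + 2 * B * (nc xstar)\<^sup>2) * (exp 1 * \<epsilon>\<^sup>2 / (\<alpha>2 * \<epsilon> - 1) / (real k + K))"
  have "0 \<le> Y" unfolding Y_def \<alpha>4_def using \<alpha>3_ge_two AB K c by simp
  moreover have "\<alpha>4 * (A + 2 * B * (nc xstar)\<^sup>2) * (2 * exp 1 * \<epsilon>\<^sup>2 / (\<alpha>2 * \<epsilon> - 1) / (real k + K)) = 2 * Y"
    and "4 * exp 1 * \<epsilon>\<^sup>2 * \<alpha>4 / (\<alpha>2 * \<epsilon> - 1) * (A + 2 * B * (nc xstar)\<^sup>2) / (real k + K) = 4 * Y"
    unfolding Y_def by (simp_all add: mult_ac)
  ultimately show "\<alpha>1 * (nc (x0 - xstar))\<^sup>2 * (K / (real k + K)) powr (\<alpha>2 * \<epsilon>)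
      + \<alpha>4 * (A + 2 * B * (nc xstar)\<^sup>2) * (2 * exp 1 * \<epsilon>\<^sup>2 / (\<alpha>2 * \<epsilon> - 1) / (real k + K))
    \<le> \<alpha>1 * (nc (x0 - xstar))\<^sup>2 * (K / (real k + K)) powr (\<alpha>2 * \<epsilon>)
      + 4 * exp 1 * \<epsilon>\<^sup>2 * \<alpha>4 / (\<alpha>2 * \<epsilon> - 1) * (A + 2 * B * (nc xstar)\<^sup>2) / (real k + K)"
    by linarith
qed

lemma mean_square_error_polynomial:
  assumes steps: "\<And>k. \<epsilon>k k = \<epsilon> / (real k + K) powr \<xi>" and small: "\<And>k. \<epsilon>k k * \<alpha>3 \<le> \<alpha>2"
    and \<xi>: "0 < \<xi>" "\<xi> < 1" and K: "1 \<le> K" "2 * \<xi> / (\<alpha>2 * \<epsilon>) \<le> K powr (1 - \<xi>)"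
    and c: "0 < \<alpha>2" "0 < \<epsilon>"
  shows "(\<integral>\<^sup>+\<omega>. ennreal ((nc (x k \<omega> - xstar))\<^sup>2) \<partial>M)
    \<le> ennreal (\<alpha>1 * (nc (x0 - xstar))\<^sup>2
        * exp (- (\<alpha>2 * \<epsilon> / (1 - \<xi>)) * ((real k + K) powr (1 - \<xi>) - K powr (1 - \<xi>)))
      + 2 * \<epsilon> * \<alpha>4 / \<alpha>2 * (A + 2 * B * (nc xstar)\<^sup>2) / (real k + K) powr \<xi>)"
proof (rule mean_square_error_bound[OF small])
  have nonneg: "0 \<le> 1 - \<alpha>2 * \<epsilon> / (real j + K) powr \<xi>" for j
    using step_factor_nonneg[OF small, of j] by (simp add: steps)
  show "(\<Prod>j<k. 1 - \<alpha>2 * \<epsilon>k j)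
      \<le> exp (- (\<alpha>2 * \<epsilon> / (1 - \<xi>)) * ((real k + K) powr (1 - \<xi>) - K powr (1 - \<xi>)))"
    using prod_one_minus_poly_le_exp[of K \<xi> "\<alpha>2 * \<epsilon>" k] nonneg K \<xi> c by (simp add: steps)
  show "damped_sq_sum \<alpha>2 \<epsilon>k k \<le> 2 / \<alpha>2 * \<epsilon>k k"
    using steps K \<xi> c step_factor_nonneg[OF small] by (intro damped_sq_sum_poly_le) auto
qed (simp add: steps add_divide_distrib algebra_simps)

end

theorem corollary2:
  fixes M :: "'w measure"
    and nc ne ns :: "'a::euclidean_space \<Rightarrow> real"
    and H :: "'a \<Rightarrow> 'a"
    and \<gamma> :: real and xstar x0 :: 'a
    and x w :: "nat \<Rightarrow> 'w \<Rightarrow> 'a"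
    and A B L lcs les ucs ues \<mu> \<alpha>1 \<alpha>2 \<alpha>3 \<alpha>4 \<epsilon> \<xi> K :: real
    and \<epsilon>k :: "nat \<Rightarrow> real"
  assumes M: "prob_space M"
    and norms: "is_norm nc" "is_norm ne" "is_norm ns"
    and contr: "\<forall>u v. nc (H u - H v) \<le> \<gamma> * nc (u - v)"
    and \<gamma>: "0 < \<gamma>" "\<gamma> < 1"
    and fixpt: "H xstar = xstar"
    and x0: "x 0 = (\<lambda>\<omega>. x0)"
    and step_def: "\<forall>k. \<epsilon>k k = \<epsilon> / (real k + K) powr \<xi>"
    and rec: "\<forall>k \<omega>. x (Suc k) \<omega> = x k \<omega> + \<epsilon>k k *\<^sub>R (H (x k \<omega>) - x k \<omega> + w k \<omega>)"
    and w_int: "\<forall>k. integrable M (w k)"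
    and w_mean: "\<forall>k. \<forall>b\<in>Basis. AE \<omega> in M.
                   real_cond_exp M (gen_filtr M x w k) (\<lambda>\<omega>. w k \<omega> \<bullet> b) \<omega> = 0"
    and w_var: "\<forall>k. AE \<omega> in M.
                   nn_cond_exp M (gen_filtr M x w k) (\<lambda>\<omega>. ennreal ((ne (w k \<omega>))\<^sup>2)) \<omega>
                   \<le> ennreal (A + B * (ne (x k \<omega>))\<^sup>2)"
    and AB: "A > 0" "B > 0"
    and smooth: "L_smooth (\<lambda>u. (ns u)\<^sup>2 / 2) ns L"
    and lcs: "0 < lcs" "lcs \<le> 1" and les: "0 < les" "les \<le> 1"
    and ucs: "1 \<le> ucs" and ues: "1 \<le> ues"
    and equiv_cs: "\<forall>u. lcs * nc u \<le> ns u \<and> ns u \<le> ucs * nc u"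
    and equiv_es: "\<forall>u. les * ne u \<le> ns u \<and> ns u \<le> ues * ne u"
    and \<mu>: "\<mu> > 0"
    and \<alpha>1_def: "\<alpha>1 = (1 + \<mu> / lcs\<^sup>2) / (1 + \<mu> / ucs\<^sup>2)"
    and \<alpha>2_def: "\<alpha>2 = 1 - \<gamma> * sqrt \<alpha>1"
    and \<alpha>3_def: "\<alpha>3 = 4 * ucs\<^sup>2 * ues\<^sup>2 * (B + 2) * L * (lcs\<^sup>2 + \<mu>) / (\<mu> * lcs\<^sup>2 * les\<^sup>2)"
    and \<alpha>4_def: "\<alpha>4 = \<alpha>3 / (2 * (B + 2))"
    and \<alpha>2_pos: "\<alpha>2 > 0"
    and \<epsilon>: "\<epsilon> > 0"
    and \<xi>: "0 < \<xi>" "\<xi> \<le> 1"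
    and K_def: "K = (if \<xi> = 1 then max 1 (\<epsilon> * \<alpha>3 / \<alpha>2)
                 else max 1 (max ((\<epsilon> * \<alpha>3 / \<alpha>2) powr (1 / \<xi>))
                                 ((2 * \<xi> / (\<alpha>2 * \<epsilon>)) powr (1 / (1 - \<xi>)))))"
  shows "\<forall>k::nat.
    (\<xi> = 1 \<and> \<epsilon> < 1 / \<alpha>2 \<longrightarrow>
       (\<integral>\<^sup>+\<omega>. ennreal ((nc (x k \<omega> - xstar))\<^sup>2) \<partial>M)
       \<le> ennreal (\<alpha>1 * (nc (x0 - xstar))\<^sup>2 * (K / (real k + K)) powr (\<alpha>2 * \<epsilon>)
          + 4 * \<epsilon>\<^sup>2 * \<alpha>4 / (1 - \<alpha>2 * \<epsilon>)
            * (A + 2 * B * (nc xstar)\<^sup>2) / (real k + K) powr (\<alpha>2 * \<epsilon>))) \<and>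
    (\<xi> = 1 \<and> \<epsilon> = 1 / \<alpha>2 \<longrightarrow>
       (\<integral>\<^sup>+\<omega>. ennreal ((nc (x k \<omega> - xstar))\<^sup>2) \<partial>M)
       \<le> ennreal (\<alpha>1 * (nc (x0 - xstar))\<^sup>2 * (K / (real k + K))
          + 4 * \<alpha>4 / \<alpha>2\<^sup>2
            * ((A + 2 * B * (nc xstar)\<^sup>2) * ln (real k + K)) / (real k + K))) \<and>
    (\<xi> = 1 \<and> \<epsilon> > 1 / \<alpha>2 \<longrightarrow>
       (\<integral>\<^sup>+\<omega>. ennreal ((nc (x k \<omega> - xstar))\<^sup>2) \<partial>M)
       \<le> ennreal (\<alpha>1 * (nc (x0 - xstar))\<^sup>2 * (K / (real k + K)) powr (\<alpha>2 * \<epsilon>)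
          + 4 * exp 1 * \<epsilon>\<^sup>2 * \<alpha>4 / (\<alpha>2 * \<epsilon> - 1)
            * (A + 2 * B * (nc xstar)\<^sup>2) / (real k + K))) \<and>
    (0 < \<xi> \<and> \<xi> < 1 \<longrightarrow>
       (\<integral>\<^sup>+\<omega>. ennreal ((nc (x k \<omega> - xstar))\<^sup>2) \<partial>M)
       \<le> ennreal (\<alpha>1 * (nc (x0 - xstar))\<^sup>2
            * exp (- (\<alpha>2 * \<epsilon> / (1 - \<xi>)) * ((real k + K) powr (1 - \<xi>) - K powr (1 - \<xi>)))
          + 2 * \<epsilon> * \<alpha>4 / \<alpha>2 * (A + 2 * B * (nc xstar)\<^sup>2) / (real k + K) powr \<xi>))"
proof -
  interpret sa: contractive_sa nc ns \<mu> L lcs ucs M ne H \<gamma> xstar x0 x w \<epsilon>k A B les ues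
  proof (intro contractive_sa.intro gen_moreau_envelope.intro contractive_sa_axioms.intro)
    show "0 \<le> \<epsilon>k k" for k using step_def \<epsilon> by simp
  qed (use norms smooth equiv_cs lcs ucs \<mu> M contr \<gamma> fixpt x0 rec w_int w_mean w_var AB les ues equiv_es
       in \<open>simp_all add: less_imp_le\<close>)
  have \<alpha>: "sa.\<alpha>1 = \<alpha>1" "sa.\<alpha>2 = \<alpha>2" "sa.\<alpha>3 = \<alpha>3" "sa.\<alpha>4 = \<alpha>4"
    by (simp_all add: sa.\<alpha>1_def sa.\<alpha>2_def sa.\<alpha>3_def sa.\<alpha>4_def \<alpha>1_def \<alpha>2_def \<alpha>3_def \<alpha>4_def)
  note K = shifted_step_size_conditions[OF \<alpha>2_pos sa.\<alpha>2_le_one[unfolded \<alpha>]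
      sa.\<alpha>3_ge_two[unfolded \<alpha>] \<epsilon> \<xi> K_def]
  have small: "\<epsilon>k k * \<alpha>3 \<le> \<alpha>2" for k using K(2) step_def by simp
  have harmonic: "\<epsilon>k k = \<epsilon> / (real k + K)" if "\<xi> = 1" for k
    using step_def K(1) that by simp
  have c: "0 < \<alpha>2 * \<epsilon>" using \<alpha>2_pos \<epsilon> by simp
  show ?thesis
    apply (intro allI conjI impI; elim conjE)
    subgoal
      by (rule sa.mean_square_error_harmonic_lt_one[unfolded \<alpha>, OF harmonic small])
        (use K c \<alpha>2_pos in \<open>auto simp: field_simps\<close>)
    subgoal
      by (rule sa.mean_square_error_harmonic_one[unfolded \<alpha>, OF harmonic small])
        (use K c \<alpha>2_pos in \<open>auto simp: field_simps\<close>)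
    subgoal
      by (rule sa.mean_square_error_harmonic_gt_one[unfolded \<alpha>, OF harmonic small])
        (use K c \<alpha>2_pos in \<open>auto simp: field_simps\<close>)
    subgoal
      by (rule sa.mean_square_error_polynomial[unfolded \<alpha>, OF step_def[rule_format] small])
        (use K \<epsilon> \<alpha>2_pos in auto)
    done
qed

end
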